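(* Let $\Sigma_M\subset\mathbb{C}P^2$ be a torus obtained from the construction in the context (with integers $\alpha_1,\alpha_2,\alpha_3$ such that $\alpha_1-\alpha_3$ and $\alpha_2-\alpha_3$ are relatively prime, and parameters $a_1>a_2>0$, $a_3$ as there). Then its area satisfies $$A(\Sigma_M)>\pi^2\frac{a_1+a_2}{\sqrt{a_1+a_3}}.$$
   Context: $\mathbb{C}P^2$ carries the Fubini–Study metric for which the Hopf projection $S^5\to\mathbb{C}P^2$ is a Riemannian submersion; $A(\Sigma)$ is the area of the immersed torus with respect to the induced metric, computed over a fundamental domain of the period lattice of the immersion. Construction: put $b=-\alpha_1-\alpha_2-\alpha_3$, $c=\alpha_1\alpha_2+\alpha_1\alpha_3+\alpha_2\alpha_3$, $c_1=-\alpha_1\alpha_2\alpha_3$. Let $a_1>a_2>0$ be reals with $P:=a_1^3a_2^2+a_1^2a_2^3+(a_1^2a_2+a_1a_2^2)bc_1+(a_1^2+a_2^2)c_1^2+2a_1^2a_2^2c\le 0$ and $P^2-(a_1-a_2)^2\bigl((a_1+a_2)c_1^2-a_1^2a_2^2+a_1a_2bc_1\bigr)^2\ge0$. Let $c_2$ be a real root of $(a_1-a_2)^2x^4+2Px^2+\bigl((a_1+a_2)c_1^2-a_1^2a_2^2+a_1a_2bc_1\bigr)^2=0$, and set $a_3=\frac{c_1^2+c_2^2}{a_1a_2}$, $a=\frac{bc_1+a_1a_3+a_2a_3-a_1a_2}{c_2}$. Define $v$ by $2e^{v(x)}=a_1\bigl(1-\frac{a_1-a_2}{a_1}\mathrm{sn}^2(x\sqrt{a_1+a_3},k)\bigr)$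 with $k=\frac{a_1-a_2}{a_1+a_3}$, where $\mathrm{sn}(u,k)=\sin\theta$ for $u=\int_0^\theta\frac{d\phi}{\sqrt{1-k^2\sin^2\phi}}$; $v$ has period $T=2u(\pi/2)/\sqrt{a_1+a_3}$. For $i$ modulo 3 let $F_i=\sqrt{\frac{2e^v+\alpha_{i+1}\alpha_{i+2}}{(\alpha_i-\alpha_{i+1})(\alpha_i-\alpha_{i+2})}}$, $G_i(x)=\alpha_i\int_0^x\frac{c_2-ae^{v}}{2\alpha_ie^{v}-c_1}dz$, and $\psi(x,y)=\bigl(F_1e^{i(G_1+\alpha_1y)}:F_2e^{i(G_2+\alpha_2y)}:F_3e^{i(G_3+\alpha_3y)}\bigr)$, a conformal immersion $\mathbb{R}^2\to\mathbb{C}P^2$ with induced metric $2e^{v(x)}(dx^2+dy^2)$. Assume there is $\tau\in\mathbb{R}$ with $\frac{G_1(T)-G_3(T)+(\alpha_1-\alpha_3)\tau}{2\pi},\ \frac{G_2(T)-G_3(T)+(\alpha_2-\alpha_3)\tau}{2\pi}\in\mathbb{Q}$; then $\psi$ is doubly periodic and $\Sigma_M=\psi(\mathbb{R}^2)$ is an immersed torus. *)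

theory Defs
  imports "HOL-Analysis.Analysis"
begin

definition sint :: "(real \<Rightarrow> real) \<Rightarrow> real \<Rightarrow> real" where
  "sint f x = (if 0 \<le> x then integral {0..x} f else - integral {x..0} f)"

definition ellF :: "real \<Rightarrow> real \<Rightarrow> real" where
  "ellF k \<theta> = sint (\<lambda>\<phi>. 1 / sqrt (1 - k\<^sup>2 * (sin \<phi>)\<^sup>2)) \<theta>"

definition jam :: "real \<Rightarrow> real \<Rightarrow> real" where
  "jam k u = (THE \<theta>. ellF k \<theta> = u)"

definition jsn :: "real \<Rightarrow> real \<Rightarrow> real" where
  "jsn k u = sin (jam k u)"

definition alp :: "real \<Rightarrow> real \<Rightarrow> real \<Rightarrow> nat \<Rightarrow> real" where
  "alp \<alpha>1 \<alpha>2 \<alpha>3 i = (if i mod 3 = 1 then \<alpha>1 else if i mod 3 = 2 then \<alpha>2 else \<alpha>3)"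

definition tor_v :: "real \<Rightarrow> real \<Rightarrow> real \<Rightarrow> real \<Rightarrow> real" where
  "tor_v a1 a2 a3 x =
     ln (a1 * (1 - (a1 - a2) / a1 * (jsn ((a1 - a2) / (a1 + a3)) (x * sqrt (a1 + a3)))\<^sup>2) / 2)"

definition tor_T :: "real \<Rightarrow> real \<Rightarrow> real \<Rightarrow> real" where
  "tor_T a1 a2 a3 = 2 * ellF ((a1 - a2) / (a1 + a3)) (pi / 2) / sqrt (a1 + a3)"

definition tor_F :: "real \<Rightarrow> real \<Rightarrow> real \<Rightarrow> real \<Rightarrow> real \<Rightarrow> real \<Rightarrow> nat \<Rightarrow> real \<Rightarrow> real" where
  "tor_F \<alpha>1 \<alpha>2 \<alpha>3 a1 a2 a3 i x =
     (let al = alp \<alpha>1 \<alpha>2 \<alpha>3 in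
      sqrt ((2 * exp (tor_v a1 a2 a3 x) + al (i+1) * al (i+2))
            / ((al i - al (i+1)) * (al i - al (i+2)))))"

definition tor_G :: "real \<Rightarrow> real \<Rightarrow> real \<Rightarrow> real \<Rightarrow> real \<Rightarrow> real \<Rightarrow> real \<Rightarrow> real \<Rightarrow> real
                      \<Rightarrow> nat \<Rightarrow> real \<Rightarrow> real" where
  "tor_G \<alpha>1 \<alpha>2 \<alpha>3 a1 a2 a3 c1 c2 a i x =
     (let al = alp \<alpha>1 \<alpha>2 \<alpha>3 in
      al i * sint (\<lambda>z. (c2 - a * exp (tor_v a1 a2 a3 z))
                        / (2 * al i * exp (tor_v a1 a2 a3 z) - c1)) x)"

text \<open>Homogeneous coordinates (component i = 1,2,3) of psi(x,y) in C^3 - {0}.\<close>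
definition tor_psi :: "real \<Rightarrow> real \<Rightarrow> real \<Rightarrow> real \<Rightarrow> real \<Rightarrow> real \<Rightarrow> real \<Rightarrow> real \<Rightarrow> real
                        \<Rightarrow> nat \<Rightarrow> real \<Rightarrow> real \<Rightarrow> complex" where
  "tor_psi \<alpha>1 \<alpha>2 \<alpha>3 a1 a2 a3 c1 c2 a i x y =
     complex_of_real (tor_F \<alpha>1 \<alpha>2 \<alpha>3 a1 a2 a3 i x)
     * exp (\<i> * complex_of_real (tor_G \<alpha>1 \<alpha>2 \<alpha>3 a1 a2 a3 c1 c2 a i x + alp \<alpha>1 \<alpha>2 \<alpha>3 i * y))"

text \<open>Period lattice of psi as a map into CP^2: translations w with psi(z + w) = psi(z)
  for all z, equality in CP^2 meaning proportionality of homogeneous coordinates.\<close>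
definition period_lattice :: "(nat \<Rightarrow> real \<Rightarrow> real \<Rightarrow> complex) \<Rightarrow> (real \<times> real) set" where
  "period_lattice \<Psi> = {w. \<forall>x y. \<exists>l::complex. l \<noteq> 0 \<and>
        (\<forall>i\<in>{1,2,3}. \<Psi> i (x + fst w) (y + snd w) = l * \<Psi> i x y)}"

definition lattice_basis :: "(real \<times> real) set \<Rightarrow> real \<times> real \<Rightarrow> real \<times> real \<Rightarrow> bool" where
  "lattice_basis L u w \<longleftrightarrow> fst u * snd w - snd u * fst w \<noteq> 0 \<and>
      L = {of_int m *\<^sub>R u + of_int n *\<^sub>R w | m n. True}"

definition fund_par :: "real \<times> real \<Rightarrow> real \<times> real \<Rightarrow> (real \<times> real) set" where
  "fund_par u w = {s *\<^sub>R u + t *\<^sub>R w | s t. 0 \<le> s \<and> s < 1 \<and> 0 \<le> t \<and> t < 1}"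

end

theory Submission
  imports Defs
begin

(* The conformal factor 2e^v is an elliptic function of x with real period T and values in
   [a2, a1]; it equals a1 exactly on the multiples of T.  Every phase G_i is quasi-periodic,
   G_i(x + nT) = G_i(x) + n G_i(T): the quartic equation satisfied by c2 makes the numerator of
   its integrand vanish wherever the denominator does.  Since |F_i|^2 is an affine function of
   e^v, every period of psi has first coordinate in T Z, and the periods are exactly the lattice
   spanned by (N T, t0) and (0, 2 pi) for a suitable N > 0; coprimality of alpha1 - alpha3 and
   alpha2 - alpha3 is what excludes shorter vertical periods.  Hence a fundamental
   parallelogram has Euclidean area at least 2 pi T, and the area of the torus is at least
   2 pi times the integral of 2e^v over one period.  Substituting x sqrt(a1 + a3) = F(theta, k),
   that integral becomes the integral over [0, pi] of (a1 cos^2 + a2 sin^2) / sqrt(1 - k^2 sin^2),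
   divided by sqrt(a1 + a3); the integrand exceeds a1 cos^2 + a2 sin^2 on (0, pi), whose
   integral is pi (a1 + a2) / 2. *)

section \<open>Signed integrals and primitives of periodic functions\<close>

lemma sint_0 [simp]: "sint f 0 = 0"
  by (simp add: sint_def)

lemma has_real_derivative_sint:
  fixes f :: "real \<Rightarrow> real"
  assumes "continuous_on UNIV f"
  shows "(sint f has_real_derivative f x) (at x)"
proof -
  define R where "R = \<bar>x\<bar> + 1"
  define I where "I y = integral {-R..y} f" for y
  have intg: "f integrable_on {p..q}" for p q
    using assms continuous_on_subset integrable_continuous_real by blast
  have sint_eq: "sint f y = I y - I 0" if "\<bar>y\<bar> < R" for y
  proof (cases "0 \<le> y")
    case True
    have "integral {-R..0} f + integral {0..y} f = integral {-R..y} f"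
      by (rule Henstock_Kurzweil_Integration.integral_combine) (use True that intg in auto)
    then show ?thesis using True by (simp add: sint_def I_def)
  next
    case False
    have "integral {-R..y} f + integral {y..0} f = integral {-R..0} f"
      by (rule Henstock_Kurzweil_Integration.integral_combine) (use False that intg in auto)
    then show ?thesis using False by (simp add: sint_def I_def)
  qed
  have "(I has_real_derivative f x) (at x within {-R..R})"
    unfolding I_def
    by (rule integral_has_real_derivative) (use assms continuous_on_subset R_def in auto)
  moreover have "x \<in> interior {-R..R}"
    using R_def by auto
  ultimately have "(I has_real_derivative f x) (at x)"
    using at_within_interior by metis
  then have "((\<lambda>y. I y - I 0) has_real_derivative f x) (at x)"
    by (auto intro!: derivative_eq_intros)
  then show ?thesis
  proof (rule has_field_derivative_transform_within_open[of _ _ _ "{-R<..<R}"])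
    show "x \<in> {-R<..<R}"
      using R_def by auto
  qed (use sint_eq in auto)
qed

lemma sint_eq_linear_if_ae_const:
  assumes "negligible Z" and "\<And>z. z \<notin> Z \<Longrightarrow> g z = C"
  shows "sint g y = C * y"
proof -
  have "integral S g = integral S (\<lambda>_. C)" for S
    by (rule integral_spike[OF assms(1)]) (use assms(2) in auto)
  then show ?thesis
    by (simp add: sint_def)
qed

lemma negligible_subset_range_int:
  fixes f :: "int \<Rightarrow> real"
  assumes "Z \<subseteq> range f"
  shows "negligible Z"
proof -
  have "negligible (\<Union>n. {f n})"
    by (rule negligible_countable_Union) auto
  then show ?thesis
    using assms negligible_subset by blast
qed

lemma periodic_primitive_shift_int:
  fixes F f :: "real \<Rightarrow> real" and n :: int
  assumes deriv: "\<And>x. (F has_real_derivative f x) (at x)" and per: "\<And>x. f (x + p) = f x"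
  shows "F (x + of_int n * p) = F x + of_int n * (F p - F 0)"
proof -
  have step: "F (y + p) = F y + (F p - F 0)" for y
  proof -
    have "((\<lambda>y. F (y + p) - F y) has_real_derivative 0) (at z)" for z
    proof -
      have "((\<lambda>y. F (y + p)) has_real_derivative f (z + p) * 1) (at z)"
        by (rule DERIV_chain2[OF deriv]) (auto intro!: derivative_eq_intros)
      from DERIV_diff[OF this deriv] show ?thesis
        by (simp add: per)
    qed
    from DERIV_isconst_all[of "\<lambda>y. F (y + p) - F y", OF allI[OF this], of y 0] show ?thesis
      by simp
  qed
  show ?thesis
  proof (induction n rule: int_induct[where k = 0])
    case (step1 i)
    have "x + of_int (i + 1) * p = (x + of_int i * p) + p"
      by (simp add: algebra_simps)
    then show ?case
      using step[of "x + of_int i * p"] step1.IH by (simp add: algebra_simps)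
  next
    case (step2 i)
    have "x + of_int i * p = (x + of_int (i - 1) * p) + p"
      by (simp add: algebra_simps)
    then show ?case
      using step[of "x + of_int (i - 1) * p"] step2.IH by (simp add: algebra_simps)
  qed simp
qed

lemma sin_squared_shift_int: "(sin (t + of_int n * pi))\<^sup>2 = (sin t)\<^sup>2"
proof -
  have sin_minus_pi: "sin (y - pi) = - sin y" for y
    using sin_periodic_pi[of "y - pi"] by simp
  show ?thesis
  proof (induction n rule: int_induct[where k = 0])
    case (step1 i)
    have "sin (t + of_int (i + 1) * pi) = - sin (t + of_int i * pi)"
      using sin_periodic_pi[of "t + of_int i * pi"] by (simp add: algebra_simps)
    then show ?case
      using step1.IH by (simp only: power2_minus)
  next
    case (step2 i)
    have "sin (t + of_int (i - 1) * pi) = - sin (t + of_int i * pi)"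
      using sin_minus_pi[of "t + of_int i * pi"] by (simp add: algebra_simps)
    then show ?case
      using step2.IH by (simp only: power2_minus)
  qed simp
qed

section \<open>The incomplete elliptic integral of the first kind\<close>

definition ellF_integrand :: "real \<Rightarrow> real \<Rightarrow> real" where
  "ellF_integrand k \<phi> = 1 / sqrt (1 - k\<^sup>2 * (sin \<phi>)\<^sup>2)"

lemma ellF_eq_sint: "ellF k = sint (ellF_integrand k)"
  by (simp add: fun_eq_iff ellF_def ellF_integrand_def[abs_def])

lemma ellF_0 [simp]: "ellF k 0 = 0"
  by (simp add: ellF_eq_sint)

lemma ellF_integrand_periodic: "ellF_integrand k (t + pi) = ellF_integrand k t"
  by (simp add: ellF_integrand_def)

lemma ellF_integrand_even: "ellF_integrand k (- t) = ellF_integrand k t"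
  by (simp add: ellF_integrand_def)

lemma sin_squared_le_1: "(sin (t::real))\<^sup>2 \<le> 1"
  by (simp add: sin_squared_eq)

context
  fixes k :: real
  assumes k_sq_less_1: "k\<^sup>2 < 1"
begin

lemma ellF_radicand_pos: "1 - k\<^sup>2 * (sin t)\<^sup>2 > 0"
proof -
  have "k\<^sup>2 * (sin t)\<^sup>2 \<le> k\<^sup>2"
    by (rule mult_left_le[OF sin_squared_le_1]) simp
  then show ?thesis
    using k_sq_less_1 by linarith
qed

lemma ellF_integrand_ge_1: "ellF_integrand k t \<ge> 1"
proof -
  have "sqrt (1 - k\<^sup>2 * (sin t)\<^sup>2) \<le> 1"
    by simp
  moreover have "sqrt (1 - k\<^sup>2 * (sin t)\<^sup>2) > 0"
    using ellF_radicand_pos by simp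
  ultimately show ?thesis
    by (simp add: ellF_integrand_def)
qed

lemma ellF_integrand_gt_1:
  assumes "k \<noteq> 0" and "sin t \<noteq> 0"
  shows "ellF_integrand k t > 1"
proof -
  have "k\<^sup>2 * (sin t)\<^sup>2 > 0"
    using assms by simp
  then have "sqrt (1 - k\<^sup>2 * (sin t)\<^sup>2) < 1"
    by simp
  moreover have "sqrt (1 - k\<^sup>2 * (sin t)\<^sup>2) > 0"
    using ellF_radicand_pos by simp
  ultimately show ?thesis
    by (simp add: ellF_integrand_def)
qed

lemma ellF_integrand_pos: "ellF_integrand k t > 0"
  using ellF_integrand_ge_1[of t] by linarith

lemma continuous_on_ellF_integrand: "continuous_on UNIV (ellF_integrand k)"
proof -
  have "sqrt (1 - k\<^sup>2 * (sin t)\<^sup>2) \<noteq> 0" for t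
    using ellF_radicand_pos[of t] by simp
  then show ?thesis
    unfolding ellF_integrand_def by (intro continuous_intros) auto
qed

lemma has_real_derivative_ellF: "(ellF k has_real_derivative ellF_integrand k t) (at t)"
  unfolding ellF_eq_sint by (rule has_real_derivative_sint[OF continuous_on_ellF_integrand])

lemma isCont_ellF: "isCont (ellF k) t"
  using has_real_derivative_ellF DERIV_isCont by blast

lemma ellF_shift_int: "ellF k (t + of_int n * pi) = ellF k t + of_int n * ellF k pi"
  using periodic_primitive_shift_int[OF has_real_derivative_ellF ellF_integrand_periodic] by simp

lemma ellF_minus: "ellF k (- t) = - ellF k t"
proof -
  have "((\<lambda>t. ellF k (- t) + ellF k t) has_real_derivative 0) (at x)" for x
  proof -
    have "((\<lambda>t. ellF k (- t)) has_real_derivative ellF_integrand k (- x) * (- 1)) (at x)"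
      by (rule DERIV_chain2[OF has_real_derivative_ellF]) (auto intro!: derivative_eq_intros)
    from DERIV_add[OF this has_real_derivative_ellF] show ?thesis
      by (simp add: ellF_integrand_even)
  qed
  from DERIV_isconst_all[OF allI[OF this], of t 0] show ?thesis
    by simp
qed

lemma ellF_strict_mono: "strict_mono (ellF k)"
proof (rule strict_monoI)
  fix s t :: real
  assume "s < t"
  then show "ellF k s < ellF k t"
    by (rule DERIV_pos_imp_increasing) (use has_real_derivative_ellF ellF_integrand_pos in blast)
qed

lemma ellF_eq_iff: "ellF k s = ellF k t \<longleftrightarrow> s = t"
  using ellF_strict_mono strict_mono_eq by blast

lemma ellF_pi_pos: "ellF k pi > 0"
  using ellF_strict_mono[THEN strict_monoD, of 0 pi] by simp

lemma ellF_pi_eq: "ellF k pi = 2 * ellF k (pi / 2)"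
  using ellF_shift_int[of "- (pi / 2)" 1] by (simp add: ellF_minus)

lemma ellF_ge_self: "0 \<le> t \<Longrightarrow> t \<le> ellF k t"
proof -
  assume "0 \<le> t"
  then have "ellF k 0 - 0 \<le> ellF k t - t"
  proof (rule DERIV_nonneg_imp_nondecreasing)
    fix x
    have "((\<lambda>t. ellF k t - t) has_real_derivative ellF_integrand k x - 1) (at x)"
      by (rule DERIV_diff[OF has_real_derivative_ellF DERIV_ident])
    then show "\<exists>y. ((\<lambda>t. ellF k t - t) has_real_derivative y) (at x) \<and> 0 \<le> y"
      using ellF_integrand_ge_1[of x] by auto
  qed
  then show ?thesis
    by simp
qed

lemma ellF_surj: "\<exists>t. ellF k t = u"
proof -
  have "\<exists>t. 0 \<le> t \<and> t \<le> \<bar>u\<bar> \<and> ellF k t = \<bar>u\<bar>"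
    by (rule IVT) (use ellF_ge_self[of "\<bar>u\<bar>"] isCont_ellF in auto)
  then obtain t where "ellF k t = \<bar>u\<bar>"
    by blast
  then show ?thesis
    by (cases "0 \<le> u") (auto simp: ellF_minus intro: exI[of _ "- t"])
qed

lemma ellF_jam [simp]: "ellF k (jam k u) = u"
proof -
  obtain t where t: "ellF k t = u"
    using ellF_surj by blast
  have "ellF k (THE \<theta>. ellF k \<theta> = u) = u"
    by (rule theI[of _ t]) (use t ellF_eq_iff in auto)
  then show ?thesis
    by (simp add: jam_def)
qed

lemma jam_ellF [simp]: "jam k (ellF k t) = t"
  using ellF_jam[of "ellF k t"] by (simp only: ellF_eq_iff)

lemma jam_shift_int: "jam k (u + of_int n * ellF k pi) = jam k u + of_int n * pi"
  using jam_ellF[of "jam k u + of_int n * pi"] by (simp add: ellF_shift_int)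

lemma isCont_jam: "isCont (jam k) u"
  using isCont_inverse_function[where d = 1 and f = "ellF k" and x = "jam k u"]
  by (simp add: isCont_ellF)

lemma has_real_derivative_jam: "(jam k has_real_derivative inverse (ellF_integrand k (jam k u))) (at u)"
  by (rule DERIV_inverse_function[where a = "u - 1" and b = "u + 1" and f = "ellF k"])
     (use has_real_derivative_ellF ellF_integrand_pos isCont_jam in \<open>auto simp: less_imp_neq[symmetric]\<close>)

end

definition weighted_ellF :: "real \<Rightarrow> real \<Rightarrow> real \<Rightarrow> real \<Rightarrow> real" where
  "weighted_ellF a1 a2 k = sint (\<lambda>t. (a1 - (a1 - a2) * (sin t)\<^sup>2) * ellF_integrand k t)"

lemma has_real_derivative_weighted_ellF:
  assumes "k\<^sup>2 < 1"
  shows "(weighted_ellF a1 a2 k has_real_derivative (a1 - (a1 - a2) * (sin t)\<^sup>2) * ellF_integrand k t) (at t)"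
  unfolding weighted_ellF_def
  by (rule has_real_derivative_sint) (intro continuous_intros continuous_on_ellF_integrand assms)

lemma weighted_ellF_pi_gt:
  assumes "k\<^sup>2 < 1" "k \<noteq> 0" "0 < a2" "a2 \<le> a1"
  shows "weighted_ellF a1 a2 k pi > pi * (a1 + a2) / 2"
proof -
  (* the subtracted term is a primitive of the weight a1 - (a1 - a2) sin^2 t *)
  define D where "D t = weighted_ellF a1 a2 k t - (a1 * t - (a1 - a2) * (t / 2 - sin (2 * t) / 4))" for t
  have D_deriv: "(D has_real_derivative (a1 - (a1 - a2) * (sin t)\<^sup>2) * (ellF_integrand k t - 1)) (at t)" for t
  proof -
    have "((\<lambda>t. a1 * t - (a1 - a2) * (t / 2 - sin (2 * t) / 4)) has_real_derivative
            a1 * 1 - (a1 - a2) * (1 / 2 - cos (2 * t) * (2 * 1) / 4)) (at t)"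
      by (auto intro!: derivative_eq_intros)
    from DERIV_diff[OF has_real_derivative_weighted_ellF[of k a1 a2, OF assms(1)] this]
    have "(D has_real_derivative (a1 - (a1 - a2) * (sin t)\<^sup>2) * ellF_integrand k t
            - (a1 * 1 - (a1 - a2) * (1 / 2 - cos (2 * t) * (2 * 1) / 4))) (at t)"
      unfolding D_def[abs_def] .
    moreover have "(a1 - (a1 - a2) * (sin t)\<^sup>2) * ellF_integrand k t
            - (a1 * 1 - (a1 - a2) * (1 / 2 - cos (2 * t) * (2 * 1) / 4))
          = (a1 - (a1 - a2) * (sin t)\<^sup>2) * (ellF_integrand k t - 1)"
      unfolding cos_double_sin by (simp add: field_simps)
    ultimately show ?thesis
      by simp
  qed
  have "D 0 < D pi"
  proof (rule DERIV_pos_imp_increasing_open[of 0 pi D])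
    fix t :: real
    assume t: "0 < t" "t < pi"
    have "(a1 - a2) * (sin t)\<^sup>2 \<le> a1 - a2"
      by (rule mult_left_le[OF sin_squared_le_1]) (use assms(4) in simp)
    then have "a1 - (a1 - a2) * (sin t)\<^sup>2 > 0"
      using assms(3) by linarith
    moreover have "ellF_integrand k t > 1"
      using sin_gt_zero[OF t] ellF_integrand_gt_1[OF assms(1,2)] by simp
    ultimately have "(a1 - (a1 - a2) * (sin t)\<^sup>2) * (ellF_integrand k t - 1) > 0"
      by simp
    then show "\<exists>y. DERIV D t :> y \<and> y > 0"
      using D_deriv by blast
  next
    show "continuous_on {0..pi} D"
      using D_deriv DERIV_isCont continuous_at_imp_continuous_on by blast
  qed simp
  moreover have "D 0 = 0" and "D pi = weighted_ellF a1 a2 k pi - pi * (a1 + a2) / 2"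
    by (simp_all add: D_def weighted_ellF_def field_simps)
  ultimately show ?thesis
    by simp
qed

section \<open>The conformal factor and its primitive\<close>

locale conformal_factor =
  fixes a1 a2 a3 :: real
  assumes a2_pos: "0 < a2" and a2_less_a1: "a2 < a1" and a3_nonneg: "0 \<le> a3"
begin

definition "k = (a1 - a2) / (a1 + a3)"
definition "s = sqrt (a1 + a3)"
definition "T = tor_T a1 a2 a3"
definition "area_density x = 2 * exp (tor_v a1 a2 a3 x)"
(* Substituting x s = ellF k theta turns the integral of the conformal factor into a weighted
   elliptic integral in the amplitude theta. *)
definition "area_primitive x = weighted_ellF a1 a2 k (jam k (x * s)) / s"

lemma k_pos: "0 < k"
  unfolding k_def using a2_less_a1 a2_pos a3_nonneg by simp

lemma k_sq_less_1: "k\<^sup>2 < 1"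
proof -
  have "k < 1"
    unfolding k_def using a2_pos a2_less_a1 a3_nonneg by (subst divide_less_eq_1_pos) auto
  then show ?thesis
    using k_pos mult_strict_mono[of k 1 k 1] by (simp add: power2_eq_square)
qed

lemma s_pos: "0 < s"
  unfolding s_def using a2_pos a2_less_a1 a3_nonneg by simp

lemma T_eq: "T = ellF k pi / s"
  unfolding T_def tor_T_def k_def[symmetric] s_def[symmetric]
  using ellF_pi_eq[OF k_sq_less_1] by simp

lemma T_pos: "0 < T"
  unfolding T_eq using ellF_pi_pos[OF k_sq_less_1] s_pos by simp

lemma area_density_eq: "area_density x = a1 - (a1 - a2) * (sin (jam k (x * s)))\<^sup>2"
proof -
  define q where "q = (sin (jam k (x * s)))\<^sup>2"
  have "(a1 - a2) * q \<le> a1 - a2"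
    unfolding q_def by (rule mult_left_le[OF sin_squared_le_1]) (use a2_less_a1 in simp)
  then have pos: "a1 - (a1 - a2) * q > 0"
    using a2_pos by linarith
  have "a1 * (1 - (a1 - a2) / a1 * q) = a1 - (a1 - a2) * q"
    using a2_pos a2_less_a1 by (simp add: field_simps)
  then show ?thesis
    unfolding area_density_def tor_v_def jsn_def k_def[symmetric] s_def[symmetric] q_def[symmetric]
    using pos by simp
qed

lemma area_density_bounds: "a2 \<le> area_density x" "area_density x \<le> a1"
proof -
  have "(a1 - a2) * (sin (jam k (x * s)))\<^sup>2 \<le> a1 - a2"
    by (rule mult_left_le[OF sin_squared_le_1]) (use a2_less_a1 in simp)
  then show "a2 \<le> area_density x"
    unfolding area_density_eq by linarith
  have "0 \<le> (a1 - a2) * (sin (jam k (x * s)))\<^sup>2"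
    using a2_less_a1 by simp
  then show "area_density x \<le> a1"
    unfolding area_density_eq by linarith
qed

lemma area_density_nonneg: "0 \<le> area_density x"
  using area_density_bounds(1)[of x] a2_pos by simp

lemma area_density_0: "area_density 0 = a1"
  unfolding area_density_eq using jam_ellF[OF k_sq_less_1, of 0] by simp

lemma area_density_ellF: "area_density (ellF k t / s) = a1 - (a1 - a2) * (sin t)\<^sup>2"
  unfolding area_density_eq using s_pos by (simp add: jam_ellF[OF k_sq_less_1])

lemma area_density_shift_int: "area_density (x + of_int n * T) = area_density x"
proof -
  have "(x + of_int n * T) * s = x * s + of_int n * ellF k pi"
    unfolding T_eq using s_pos by (simp add: field_simps)
  then show ?thesis
    unfolding area_density_eq by (simp add: jam_shift_int[OF k_sq_less_1] sin_squared_shift_int)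
qed

lemma area_density_periodic: "area_density (x + T) = area_density x"
  using area_density_shift_int[of x 1] by simp

lemma area_density_eq_a1_imp: "area_density y = a1 \<Longrightarrow> \<exists>n::int. y = of_int n * T"
proof -
  assume "area_density y = a1"
  then have "sin (jam k (y * s)) = 0"
    unfolding area_density_eq using a2_less_a1 by simp
  then obtain n :: int where n: "jam k (y * s) = of_int n * pi"
    using sin_zero_iff_int2 by blast
  have "y * s = ellF k (0 + of_int n * pi)"
    using ellF_jam[OF k_sq_less_1, of "y * s"] n by simp
  also have "\<dots> = of_int n * ellF k pi"
    using ellF_shift_int[OF k_sq_less_1, of 0 n] by simp
  finally show ?thesis
    unfolding T_eq using s_pos by (auto simp: field_simps)
qed

lemma negligible_area_density_level:
  assumes "e = a1 \<or> e = a2"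
  shows "negligible {z. area_density z = e}"
  using assms
proof
  assume "e = a1"
  then have "{z. area_density z = e} \<subseteq> range (\<lambda>n::int. of_int n * T)"
    using area_density_eq_a1_imp by blast
  then show ?thesis
    by (rule negligible_subset_range_int)
next
  assume "e = a2"
  have "{z. area_density z = e} \<subseteq> range (\<lambda>i::int. ellF k (of_int i * (pi / 2)) / s)"
  proof
    fix z
    assume "z \<in> {z. area_density z = e}"
    then have "(a1 - a2) * (1 - (sin (jam k (z * s)))\<^sup>2) = 0"
      unfolding area_density_eq \<open>e = a2\<close> by (simp add: algebra_simps)
    then have "(sin (jam k (z * s)))\<^sup>2 = 1"
      using a2_less_a1 by simp
    then have "cos (jam k (z * s)) = 0"
      using sin_cos_squared_add[of "jam k (z * s)"] by simp
    then obtain i where i: "jam k (z * s) = of_int i * (pi / 2)"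
      using cos_zero_iff_int by blast
    have "z * s = ellF k (of_int i * (pi / 2))"
      using ellF_jam[OF k_sq_less_1, of "z * s"] unfolding i by simp
    then have "z = ellF k (of_int i * (pi / 2)) / s"
      using s_pos by (simp add: field_simps)
    then show "z \<in> range (\<lambda>i::int. ellF k (of_int i * (pi / 2)) / s)"
      by blast
  qed
  then show ?thesis
    by (rule negligible_subset_range_int)
qed

lemma has_real_derivative_jam_scaled:
  "((\<lambda>x. jam k (x * s)) has_real_derivative inverse (ellF_integrand k (jam k (x * s))) * s) (at x)"
  by (rule DERIV_chain2[OF has_real_derivative_jam[OF k_sq_less_1]]) (auto intro!: derivative_eq_intros)

lemma isCont_area_density: "isCont area_density x"
proof -
  have "isCont (\<lambda>x. jam k (x * s)) x"
    using has_real_derivative_jam_scaled DERIV_isCont by blast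
  then show ?thesis
    unfolding area_density_eq[abs_def] by (intro continuous_intros)
qed

lemma continuous_on_area_density: "continuous_on S area_density"
  using isCont_area_density continuous_at_imp_continuous_on by blast

lemma area_density_attains:
  assumes "a2 \<le> e" "e \<le> a1"
  shows "\<exists>x. area_density x = e"
proof -
  have "area_density (ellF k (pi / 2) / s) = a2"
    by (simp add: area_density_ellF)
  moreover have "0 \<le> ellF k (pi / 2) / s"
    using ellF_strict_mono[OF k_sq_less_1, THEN strict_monoD, of 0 "pi / 2"] s_pos by simp
  ultimately show ?thesis
    using IVT2'[of area_density "ellF k (pi / 2) / s" e 0] assms area_density_0 continuous_on_area_density
    by auto
qed

lemma borel_measurable_area_density: "area_density \<in> borel_measurable borel"
  by (rule borel_measurable_continuous_onI[OF continuous_on_area_density])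

lemma has_real_derivative_area_primitive: "(area_primitive has_real_derivative area_density x) (at x)"
proof -
  let ?t = "jam k (x * s)"
  have "((\<lambda>x. weighted_ellF a1 a2 k (jam k (x * s)) / s) has_real_derivative
          (a1 - (a1 - a2) * (sin ?t)\<^sup>2) * ellF_integrand k ?t * (inverse (ellF_integrand k ?t) * s) / s) (at x)"
    by (intro DERIV_cdivide DERIV_chain2[OF has_real_derivative_weighted_ellF[OF k_sq_less_1]]
        has_real_derivative_jam_scaled)
  moreover have "(a1 - (a1 - a2) * (sin ?t)\<^sup>2) * ellF_integrand k ?t * (inverse (ellF_integrand k ?t) * s) / s
      = area_density x"
    unfolding area_density_eq using s_pos ellF_integrand_pos[OF k_sq_less_1, of ?t] by (simp add: field_simps)
  ultimately show ?thesis
    unfolding area_primitive_def[abs_def] by simp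
qed

lemma area_primitive_0: "area_primitive 0 = 0"
  unfolding area_primitive_def weighted_ellF_def using jam_ellF[OF k_sq_less_1, of 0] by simp

lemma area_primitive_shift_int: "area_primitive (x + of_int n * T) = area_primitive x + of_int n * area_primitive T"
  using periodic_primitive_shift_int[OF has_real_derivative_area_primitive area_density_periodic] area_primitive_0
  by simp

lemma two_pi_area_primitive_T_gt: "2 * pi * area_primitive T > pi\<^sup>2 * (a1 + a2) / s"
proof -
  have "2 * pi * area_primitive T = 2 * pi * weighted_ellF a1 a2 k pi / s"
    unfolding area_primitive_def T_eq using s_pos by (simp add: jam_ellF[OF k_sq_less_1])
  also have "\<dots> > 2 * pi * (pi * (a1 + a2) / 2) / s"
    using weighted_ellF_pi_gt[OF k_sq_less_1] k_pos a2_pos a2_less_a1 s_pos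
    by (intro divide_strict_right_mono mult_strict_left_mono) auto
  finally show ?thesis
    by (simp add: power2_eq_square)
qed

lemma area_primitive_T_pos: "0 < area_primitive T"
proof -
  have "0 < pi\<^sup>2 * (a1 + a2) / s"
    using s_pos a2_pos a2_less_a1 by simp
  then have "0 < 2 * pi * area_primitive T"
    using two_pi_area_primitive_T_gt by linarith
  then show ?thesis
    by (simp add: zero_less_mult_iff)
qed

end

section \<open>Integrals over fundamental parallelograms\<close>

lemma fund_par_commute: "fund_par u w = fund_par w u"
  unfolding fund_par_def by (auto, (metis add.commute)+)

lemma mem_fund_par_iff:
  fixes u w z :: "real \<times> real"
  defines "D \<equiv> fst u * snd w - snd u * fst w"
  assumes "D \<noteq> 0"
  shows "z \<in> fund_par u w \<longleftrightarrow>
    (let \<sigma> = (fst z * snd w - snd z * fst w) / D; \<tau> = (fst u * snd z - snd u * fst z) / D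
     in 0 \<le> \<sigma> \<and> \<sigma> < 1 \<and> 0 \<le> \<tau> \<and> \<tau> < 1)"
proof -
  obtain u1 u2 w1 w2 x y where uwz: "u = (u1, u2)" "w = (w1, w2)" "z = (x, y)"
    by (metis prod.exhaust)
  have D: "D = u1 * w2 - u2 * w1"
    unfolding D_def uwz by simp
  define \<sigma> where "\<sigma> = (x * w2 - y * w1) / D"
  define \<tau> where "\<tau> = (u1 * y - u2 * x) / D"
  have coords: "a = \<sigma> \<and> b = \<tau>" if "z = a *\<^sub>R u + b *\<^sub>R w" for a b
    using that assms(2) unfolding \<sigma>_def \<tau>_def uwz D by (auto simp: field_simps)
  have "\<sigma> * u1 + \<tau> * w1 = ((x * w2 - y * w1) * u1 + (u1 * y - u2 * x) * w1) / D"
    "\<sigma> * u2 + \<tau> * w2 = ((x * w2 - y * w1) * u2 + (u1 * y - u2 * x) * w2) / D"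
    unfolding \<sigma>_def \<tau>_def by (simp_all add: add_divide_distrib)
  moreover have "(x * w2 - y * w1) * u1 + (u1 * y - u2 * x) * w1 = x * D"
    "(x * w2 - y * w1) * u2 + (u1 * y - u2 * x) * w2 = y * D"
    unfolding D by (simp_all add: algebra_simps)
  ultimately have "x = \<sigma> * u1 + \<tau> * w1" "y = \<sigma> * u2 + \<tau> * w2"
    using assms(2) by simp_all
  then have "z = \<sigma> *\<^sub>R u + \<tau> *\<^sub>R w"
    unfolding uwz by simp
  then have "z \<in> fund_par u w \<longleftrightarrow> 0 \<le> \<sigma> \<and> \<sigma> < 1 \<and> 0 \<le> \<tau> \<and> \<tau> < 1"
    unfolding fund_par_def using coords by blast
  then show ?thesis
    unfolding \<sigma>_def \<tau>_def uwz by (simp add: Let_def)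
qed

lemma nn_integral_scaled_unit_interval:
  fixes c K :: real
  assumes "c \<noteq> 0" "0 \<le> K"
  shows "(\<integral>\<^sup>+y. ennreal (if 0 \<le> y / c \<and> y / c < 1 then K else 0) \<partial>lborel) = ennreal (K * \<bar>c\<bar>)"
proof -
  define I where "I = (if 0 < c then {0..<c} else {c<..0})"
  have "(0 \<le> y / c \<and> y / c < 1) \<longleftrightarrow> y \<in> I" for y
    using assms(1) by (auto simp: I_def zero_le_divide_iff divide_less_eq)
  then have "(\<integral>\<^sup>+y. ennreal (if 0 \<le> y / c \<and> y / c < 1 then K else 0) \<partial>lborel)
      = (\<integral>\<^sup>+y. ennreal K * indicator I y \<partial>lborel)"
    by (intro nn_integral_cong) (simp add: indicator_def)
  also have "\<dots> = ennreal K * emeasure lborel I"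
    by (rule nn_integral_cmult_indicator) (simp add: I_def)
  also have "emeasure lborel I = ennreal \<bar>c\<bar>"
    using assms(1) by (simp add: I_def)
  finally show ?thesis
    using assms(2) by (simp add: ennreal_mult)
qed

lemma borel_measurable_fund_par_fst:
  fixes f :: "real \<Rightarrow> real"
  assumes "fst u * snd w - snd u * fst w \<noteq> 0" and [measurable]: "f \<in> borel_measurable borel"
  shows "(\<lambda>z. if z \<in> fund_par u w then f (fst z) else 0) \<in> borel_measurable borel"
proof -
  have "(\<lambda>z. if z \<in> fund_par u w then f (fst z) else 0) \<in> borel_measurable (borel \<Otimes>\<^sub>M borel)"
    unfolding mem_fund_par_iff[OF assms(1)] Let_def by measurable
  then show ?thesis
    by (simp only: borel_prod)
qed

(* After the shear (x, y) \<mapsto> (x, x u2 / u1 + y) the parallelogram becomes a union of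
   horizontal segments of length |u1| over an interval of heights of length |D / u1|. *)
lemma mem_fund_par_shear_iff:
  fixes u1 u2 w1 w2 x y :: real
  defines "D \<equiv> u1 * w2 - u2 * w1"
  assumes "D \<noteq> 0" and "u1 \<noteq> 0"
  shows "(x, x * u2 / u1 + y) \<in> fund_par (u1, u2) (w1, w2) \<longleftrightarrow>
    0 \<le> x / u1 - y * w1 / D \<and> x / u1 - y * w1 / D < 1 \<and> 0 \<le> y / (D / u1) \<and> y / (D / u1) < 1"
proof -
  have det: "fst (u1, u2) * snd (w1, w2) - snd (u1, u2) * fst (w1, w2) \<noteq> 0"
    using assms(2) unfolding D_def by simp
  show ?thesis
    unfolding mem_fund_par_iff[OF det] Let_def
    using assms(2,3) unfolding D_def by (simp add: field_simps)
qed

lemma nn_integral_fund_par_fst: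
  fixes u w :: "real \<times> real" and f :: "real \<Rightarrow> real"
  defines "D \<equiv> fst u * snd w - snd u * fst w"
  assumes "D \<noteq> 0" and "fst u \<noteq> 0"
    and f_meas [measurable]: "f \<in> borel_measurable borel" and "0 \<le> K"
    and period: "\<And>c. (\<integral>\<^sup>+x. ennreal (if 0 \<le> x / fst u - c \<and> x / fst u - c < 1 then f x else 0) \<partial>lborel)
                    = ennreal K"
  shows "(\<integral>\<^sup>+z. ennreal (if z \<in> fund_par u w then f (fst z) else 0) \<partial>lborel) = ennreal (K * \<bar>D / fst u\<bar>)"
proof -
  obtain u1 u2 w1 w2 where uw: "u = (u1, u2)" "w = (w1, w2)"
    by (metis prod.exhaust)
  have D: "D = u1 * w2 - u2 * w1" and "u1 \<noteq> 0"
    using assms(3) unfolding D_def uw by simp_all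
  define F where "F z = (if z \<in> fund_par u w then f (fst z) else 0)" for z
  define G where "G x y = (if 0 \<le> x / u1 - y * w1 / D \<and> x / u1 - y * w1 / D < 1
                              \<and> 0 \<le> y / (D / u1) \<and> y / (D / u1) < 1 then f x else 0)" for x y
  have [measurable]: "F \<in> borel_measurable borel"
    unfolding F_def using borel_measurable_fund_par_fst assms(2) f_meas unfolding D_def by blast
  have G_meas: "(\<lambda>(x, y). ennreal (G x y)) \<in> borel_measurable (lborel \<Otimes>\<^sub>M lborel)"
    unfolding G_def by measurable
  have inner: "(\<integral>\<^sup>+x. ennreal (G x y) \<partial>lborel)
      = ennreal (if 0 \<le> y / (D / u1) \<and> y / (D / u1) < 1 then K else 0)" for y
  proof (cases "0 \<le> y / (D / u1) \<and> y / (D / u1) < 1")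
    case True
    then show ?thesis
      using period[of "y * w1 / D"] by (simp add: G_def uw)
  next
    case False
    then have "(\<lambda>x. ennreal (G x y)) = (\<lambda>x. 0)"
      unfolding G_def by auto
    then show ?thesis
      by (simp only: if_not_P[OF False] nn_integral_const ennreal_0 mult_zero_left)
  qed
  have "(\<integral>\<^sup>+z. ennreal (F z) \<partial>lborel) = (\<integral>\<^sup>+z. ennreal (F z) \<partial>(lborel \<Otimes>\<^sub>M lborel))"
    by (simp only: lborel_prod)
  also have "\<dots> = (\<integral>\<^sup>+x. \<integral>\<^sup>+y. ennreal (F (x, y)) \<partial>lborel \<partial>lborel)"
    by (rule lborel.nn_integral_fst[symmetric]) (simp add: lborel_prod)
  also have "\<dots> = (\<integral>\<^sup>+x. \<integral>\<^sup>+y. ennreal (G x y) \<partial>lborel \<partial>lborel)"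
  proof (rule nn_integral_cong)
    fix x
    have "F (x, x * u2 / u1 + y) = G x y" for y
      unfolding F_def G_def uw mem_fund_par_shear_iff[OF assms(2)[unfolded D uw] \<open>u1 \<noteq> 0\<close>] D
      by simp
    then show "(\<integral>\<^sup>+y. ennreal (F (x, y)) \<partial>lborel) = (\<integral>\<^sup>+y. ennreal (G x y) \<partial>lborel)"
      using nn_integral_real_affine[of "\<lambda>y. ennreal (F (x, y))" 1 "x * u2 / u1"] by simp
  qed
  also have "\<dots> = (\<integral>\<^sup>+y. \<integral>\<^sup>+x. ennreal (G x y) \<partial>lborel \<partial>lborel)"
    by (rule lborel_pair.Fubini'[symmetric, OF G_meas])
  also have "\<dots> = ennreal (K * \<bar>D / u1\<bar>)"
    using nn_integral_scaled_unit_interval[of "D / u1" K] assms(2,5) \<open>u1 \<noteq> 0\<close> by (simp add: inner)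
  finally show ?thesis
    unfolding F_def uw by simp
qed

lemma has_integral_fund_par_fst:
  fixes u w :: "real \<times> real" and f :: "real \<Rightarrow> real"
  defines "D \<equiv> fst u * snd w - snd u * fst w"
  assumes "D \<noteq> 0" and "fst u \<noteq> 0"
    and "f \<in> borel_measurable borel" and "\<And>x. 0 \<le> f x" and "0 \<le> K"
    and "\<And>c. (\<integral>\<^sup>+x. ennreal (if 0 \<le> x / fst u - c \<and> x / fst u - c < 1 then f x else 0) \<partial>lborel)
                    = ennreal K"
  shows "((\<lambda>z. f (fst z)) has_integral (K * \<bar>D / fst u\<bar>)) (fund_par u w)"
proof -
  have "((\<lambda>z. if z \<in> fund_par u w then f (fst z) else 0) has_integral (K * \<bar>D / fst u\<bar>)) UNIV"
    using assms nn_integral_fund_par_fst[of u w f K] borel_measurable_fund_par_fst[of u w f]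
    by (intro nn_integral_has_integral) auto
  then show ?thesis
    unfolding has_integral_restrict_UNIV .
qed

context conformal_factor
begin

lemma has_integral_area_density:
  assumes "p \<le> q" and "{p<..<q} \<subseteq> S" and "S \<subseteq> {p..q}"
  shows "(area_density has_integral (area_primitive q - area_primitive p)) S"
proof -
  have "(area_density has_integral (area_primitive q - area_primitive p)) {p..q}"
  proof (rule fundamental_theorem_of_calculus[OF assms(1)])
    fix x
    show "(area_primitive has_vector_derivative area_density x) (at x within {p..q})"
      using has_real_derivative_area_primitive[of x]
      by (simp add: has_real_derivative_iff_has_vector_derivative has_vector_derivative_at_within)
  qed
  moreover have "{p..q} - S \<subseteq> {p, q}"
    using assms(2) by (force simp: subset_iff)
  then have "negligible ({p..q} - S)"
    by (rule negligible_subset[rotated]) simp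
  moreover have "{x \<in> S - {p..q}. area_density x \<noteq> 0} = {}"
    using assms(3) by blast
  ultimately show ?thesis
    using has_integral_spike_set_eq[of S "{p..q}" area_density] negligible_subset[of "{p..q} - S"]
    by (metis (no_types, lifting) negligible_empty mem_Collect_eq subsetI)
qed

lemma nn_integral_area_density_period:
  assumes "u1 = of_int j * T" and "u1 \<noteq> 0"
  shows "(\<integral>\<^sup>+x. ennreal (if 0 \<le> x / u1 - c \<and> x / u1 - c < 1 then area_density x else 0) \<partial>lborel)
       = ennreal (\<bar>of_int j\<bar> * area_primitive T)"
proof -
  define S where "S = {x. 0 \<le> x / u1 - c \<and> x / u1 - c < 1}"
  have S_eq: "S = {x. 0 \<le> (x - u1 * c) / u1 \<and> (x - u1 * c) / u1 < 1}"
    unfolding S_def using assms(2) by (simp add: diff_divide_distrib)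
  have "(area_density has_integral (\<bar>of_int j\<bar> * area_primitive T)) S"
  proof (cases "0 < u1")
    case True
    then have "0 < j"
      using assms T_pos by (simp add: zero_less_mult_iff)
    have "S = {u1 * c..<u1 * c + u1}"
      unfolding S_eq using True by (auto simp: zero_le_divide_iff divide_less_eq)
    then have "(area_density has_integral (area_primitive (u1 * c + u1) - area_primitive (u1 * c))) S"
      using True by (intro has_integral_area_density) auto
    then show ?thesis
      using area_primitive_shift_int[of "u1 * c" j] assms(1) \<open>0 < j\<close> by simp
  next
    case False
    then have "u1 < 0"
      using assms(2) by simp
    then have "j < 0"
      using assms(1) T_pos by (simp add: mult_less_0_iff)
    have "S = {u1 * c + u1<..u1 * c}"
      unfolding S_eq using \<open>u1 < 0\<close> by (auto simp: zero_le_divide_iff divide_less_eq)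
    then have "(area_density has_integral (area_primitive (u1 * c) - area_primitive (u1 * c + u1))) S"
      using \<open>u1 < 0\<close> by (intro has_integral_area_density) auto
    then show ?thesis
      using area_primitive_shift_int[of "u1 * c" j] assms(1) \<open>j < 0\<close> by simp
  qed
  then have "(\<integral>\<^sup>+x. ennreal (indicator S x * area_density x) \<partial>lborel)
      = ennreal (\<bar>of_int j\<bar> * area_primitive T)"
    by (rule nn_integral_has_integral_lebesgue[OF area_density_nonneg])
  moreover have "indicator S x * area_density x = (if 0 \<le> x / u1 - c \<and> x / u1 - c < 1 then area_density x else 0)"
    for x
    by (simp add: S_def indicator_def)
  ultimately show ?thesis
    by simp
qed

lemma has_integral_area_density_fund_par:
  fixes u w :: "real \<times> real"
  assumes "fst u = of_int ju * T" "fst w = of_int jw * T"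
    and "fst u * snd w - snd u * fst w \<noteq> 0"
  shows "((\<lambda>z. area_density (fst z)) has_integral
           (\<bar>fst u * snd w - snd u * fst w\<bar> * area_primitive T / T)) (fund_par u w)"
proof -
  have *: "((\<lambda>z. area_density (fst z)) has_integral
           (\<bar>fst u * snd w - snd u * fst w\<bar> * area_primitive T / T)) (fund_par u w)"
    if u: "fst u = of_int j * T" "fst u \<noteq> 0" and D: "fst u * snd w - snd u * fst w \<noteq> 0"
    for u w :: "real \<times> real" and j :: int
  proof -
    have "j \<noteq> 0"
      using u by auto
    have "((\<lambda>z. area_density (fst z)) has_integral
          (\<bar>of_int j\<bar> * area_primitive T * \<bar>(fst u * snd w - snd u * fst w) / fst u\<bar>)) (fund_par u w)"
      using D u(2) nn_integral_area_density_period[OF u] area_primitive_T_pos area_density_nonneg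
        borel_measurable_area_density
      by (intro has_integral_fund_par_fst) auto
    moreover have "\<bar>of_int j\<bar> * area_primitive T * \<bar>(fst u * snd w - snd u * fst w) / fst u\<bar>
        = \<bar>fst u * snd w - snd u * fst w\<bar> * area_primitive T / T"
      using \<open>j \<noteq> 0\<close> T_pos unfolding u(1) by (simp add: abs_mult field_simps)
    ultimately show ?thesis
      by simp
  qed
  show ?thesis
  proof (cases "fst u = 0")
    case False
    then show ?thesis
      using *[OF assms(1)] assms(3) by blast
  next
    case True
    then have "fst w \<noteq> 0" "fst w * snd u - snd w * fst u \<noteq> 0"
      using assms(3) by auto
    moreover have "\<bar>fst w * snd u - snd w * fst u\<bar> = \<bar>fst u * snd w - snd u * fst w\<bar>"
      by (simp add: abs_minus_commute algebra_simps)
    ultimately show ?thesis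
      using *[OF assms(2)] by (metis fund_par_commute)
  qed
qed

end

section \<open>The torus: coefficients and quasi-periodicity of the phases\<close>

locale torus_coefficients =
  fixes x1 x2 x3 a1 a2 c2 :: real
  assumes a2_pos: "0 < a2" and a2_less_a1: "a2 < a1"
begin

definition "b = - x1 - x2 - x3"
definition "c = x1 * x2 + x1 * x3 + x2 * x3"
definition "c1 = - x1 * x2 * x3"
definition "a3 = (c1^2 + c2^2) / (a1 * a2)"
definition "a = (b * c1 + a1 * a3 + a2 * a3 - a1 * a2) / c2"
definition "P = a1^3 * a2^2 + a1^2 * a2^3 + (a1^2 * a2 + a1 * a2^2) * b * c1
               + (a1^2 + a2^2) * c1^2 + 2 * a1^2 * a2^2 * c"
definition "R = (a1 + a2) * c1^2 - a1^2 * a2^2 + a1 * a2 * b * c1"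

(* Writing E = 2e^v, the integrand of G_i is numer E / (alpha_i (E + alpha_(i+1) alpha_(i+2)));
   pole_poly collects the three denominators. *)
definition "pole_poly e = (e + x2 * x3) * (e + x1 * x3) * (e + x1 * x2)"
definition "numer e = c2 - a * e / 2"

lemma a3_nonneg: "0 \<le> a3"
  unfolding a3_def using a2_pos a2_less_a1 by simp

sublocale conformal_factor a1 a2 a3
  using a2_pos a2_less_a1 a3_nonneg by unfold_locales

lemma a3_eq: "a1 * a2 * a3 = c1^2 + c2^2"
  unfolding a3_def using a2_pos a2_less_a1 by simp

lemma quartic_eq:
  assumes "c2 \<noteq> 0"
  shows "(a1 - a2)^2 * c2^4 + 2 * P * c2^2 + R^2 = 4 * a1^2 * a2^2 * c2^2 * (c + a^2 / 4 - a3 + a1 + a2)"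
proof -
  have "a * c2 = b * c1 + a1 * a3 + a2 * a3 - a1 * a2"
    unfolding a_def using assms by simp
  then have "a1 * a2 * (a * c2) = a1 * a2 * (b * c1 + a1 * a3 + a2 * a3 - a1 * a2)"
    by simp
  also have "\<dots> = a1 * a2 * b * c1 + (a1 + a2) * (a1 * a2 * a3) - a1^2 * a2^2"
    by (simp add: algebra_simps power2_eq_square)
  finally have a_eq: "a1 * a2 * (a * c2) = a1 * a2 * b * c1 + (a1 + a2) * (c1^2 + c2^2) - a1^2 * a2^2"
    by (simp only: a3_eq)
  have "4 * a1^2 * a2^2 * c2^2 * (c + a^2 / 4 - a3 + a1 + a2)
     = 4 * a1^2 * a2^2 * c2^2 * c + (a1 * a2 * (a * c2))^2 - 4 * a1 * a2 * c2^2 * (a1 * a2 * a3)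
       + 4 * a1^2 * a2^2 * c2^2 * (a1 + a2)"
    by (simp add: algebra_simps power2_eq_square)
  also have "\<dots> = 4 * a1^2 * a2^2 * c2^2 * c + (a1 * a2 * b * c1 + (a1 + a2) * (c1^2 + c2^2) - a1^2 * a2^2)^2
       - 4 * a1 * a2 * c2^2 * (c1^2 + c2^2) + 4 * a1^2 * a2^2 * c2^2 * (a1 + a2)"
    by (simp only: a_eq a3_eq)
  also have "\<dots> = (a1 - a2)^2 * c2^4 + 2 * P * c2^2 + R^2"
    unfolding P_def R_def by algebra
  finally show ?thesis
    by simp
qed

lemma pole_poly_add_numer_sq:
  assumes "c2 \<noteq> 0" and "(a1 - a2)^2 * c2^4 + 2 * P * c2^2 + R^2 = 0"
  shows "pole_poly e + (numer e)^2 = (e - a1) * (e - a2) * (e + a3)"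
proof -
  have "c + a^2 / 4 - (a3 - a1 - a2) = 0"
    using quartic_eq[OF assms(1)] assms a2_pos a2_less_a1 by simp
  moreover have "b * c1 - a * c2 - (a1 * a2 - (a1 + a2) * a3) = 0"
    unfolding a_def using assms(1) by (simp add: field_simps)
  moreover have "c1^2 + c2^2 - a1 * a2 * a3 = 0"
    using a3_eq by simp
  moreover have "pole_poly e + (numer e)^2 - (e - a1) * (e - a2) * (e + a3)
      = e^2 * (c + a^2 / 4 - (a3 - a1 - a2)) + e * (b * c1 - a * c2 - (a1 * a2 - (a1 + a2) * a3))
        + (c1^2 + c2^2 - a1 * a2 * a3)"
    unfolding pole_poly_def numer_def b_def c_def c1_def
    by (simp add: field_simps power2_eq_square power3_eq_cube)
  ultimately show ?thesis
    by simp
qed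

end

locale torus = torus_coefficients +
  assumes distinct: "x1 \<noteq> x2" "x1 \<noteq> x3" "x2 \<noteq> x3"
    and root: "(a1 - a2)^2 * c2^4 + 2 * P * c2^2 + R^2 = 0"
begin

lemma pole_in_range_imp:
  assumes "c2 \<noteq> 0" and "pole_poly e = 0" and "a2 \<le> e" "e \<le> a1"
  shows "numer e = 0" and "e = a1 \<or> e = a2"
proof -
  have "(e - a1) * (e - a2) * (e + a3) \<le> 0"
    using assms(3,4) a3_nonneg a2_pos by (simp add: mult_le_0_iff)
  then have "(numer e)^2 \<le> 0"
    using pole_poly_add_numer_sq[OF assms(1) root, of e] assms(2) by simp
  then show "numer e = 0"
    by simp
  then have "(e - a1) * (e - a2) * (e + a3) = 0"
    using pole_poly_add_numer_sq[OF assms(1) root, of e] assms(2) by simp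
  then show "e = a1 \<or> e = a2"
    using assms(3) a3_nonneg a2_pos by auto
qed

definition "phase_integrand \<xi> z = (c2 - a * exp (tor_v a1 a2 a3 z)) / (2 * \<xi> * exp (tor_v a1 a2 a3 z) - c1)"

lemma phase_integrand_eq:
  "\<xi> * p = - c1 \<Longrightarrow> phase_integrand \<xi> z = numer (area_density z) / (\<xi> * (area_density z + p))"
  unfolding phase_integrand_def area_density_def numer_def by (simp add: algebra_simps)

(* At a pole inside the range [a2, a1] of 2e^v the numerator vanishes as well
   (pole_in_range_imp), so the integrand is constant off a negligible level set. *)
lemma sint_phase_integrand_at_pole:
  assumes "c2 \<noteq> 0" "\<xi> \<noteq> 0" and pole: "pole_poly (- p) = 0" and prod: "\<xi> * p = - c1"
    and z0: "area_density z0 + p = 0"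
  shows "sint (phase_integrand \<xi>) y = - a / (2 * \<xi>) * y"
proof -
  define e where "e = area_density z0"
  have "numer e = 0" and e_cases: "e = a1 \<or> e = a2"
    using pole_in_range_imp[OF \<open>c2 \<noteq> 0\<close>, of e] pole area_density_bounds z0
    unfolding e_def by (auto simp: add_eq_0_iff)
  have "phase_integrand \<xi> z = - a / (2 * \<xi>)" if "area_density z \<noteq> e" for z
  proof -
    have "numer (area_density z) = - a * (area_density z - e) / 2"
      using \<open>numer e = 0\<close> unfolding numer_def by (simp add: algebra_simps)
    moreover have "area_density z + p = area_density z - e"
      using z0 e_def by simp
    ultimately have "phase_integrand \<xi> z = (- a * (area_density z - e) / 2) / (\<xi> * (area_density z - e))"
      unfolding phase_integrand_eq[OF prod] by simp
    also have "\<dots> = - a / (2 * \<xi>)"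
      using that \<open>\<xi> \<noteq> 0\<close> by (simp add: field_simps)
    finally show ?thesis .
  qed
  then show ?thesis
    using negligible_area_density_level[OF e_cases] by (intro sint_eq_linear_if_ae_const) auto
qed

lemma sint_phase_integrand_shift_int:
  assumes pole: "pole_poly (- p) = 0" and prod: "\<xi> * p = - c1"
  shows "sint (phase_integrand \<xi>) (x + of_int n * T)
    = sint (phase_integrand \<xi>) x + of_int n * sint (phase_integrand \<xi>) T"
proof -
  consider "c2 = 0 \<or> \<xi> = 0" | "c2 \<noteq> 0" "\<xi> \<noteq> 0" "\<forall>z. area_density z + p \<noteq> 0"
    | z0 where "c2 \<noteq> 0" "\<xi> \<noteq> 0" "area_density z0 + p = 0"
    by blast
  then show ?thesis
  proof cases
    case 1
    then have "phase_integrand \<xi> = (\<lambda>_. 0)"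
      using prod unfolding phase_integrand_def a_def by auto
    then show ?thesis
      by (simp add: sint_def)
  next
    case 2
    then have "continuous_on UNIV (phase_integrand \<xi>)"
      unfolding phase_integrand_eq[OF prod, abs_def] numer_def
      by (intro continuous_intros continuous_on_area_density) auto
    moreover have "phase_integrand \<xi> (z + T) = phase_integrand \<xi> z" for z
      unfolding phase_integrand_eq[OF prod] area_density_periodic ..
    ultimately show ?thesis
      using periodic_primitive_shift_int[OF has_real_derivative_sint, of "phase_integrand \<xi>" T x n]
      by simp
  next
    case 3
    then have "sint (phase_integrand \<xi>) y = - a / (2 * \<xi>) * y" for y
      by (intro sint_phase_integrand_at_pole[OF _ _ pole prod])
    then show ?thesis
      by (simp only: distrib_left mult.left_commute)
  qed
qed

end

section \<open>The period lattice\<close>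

lemma exp_i_real_eq_iff:
  "exp (\<i> * complex_of_real A) = exp (\<i> * complex_of_real B) \<longleftrightarrow> (\<exists>m::int. A = B + 2 * pi * of_int m)"
proof
  assume "exp (\<i> * complex_of_real A) = exp (\<i> * complex_of_real B)"
  then obtain n :: int where "\<i> * complex_of_real A = \<i> * complex_of_real B + complex_of_real (of_int (2 * n) * pi) * \<i>"
    unfolding exp_eq by auto
  then have "Im (\<i> * complex_of_real A) = Im (\<i> * complex_of_real B + complex_of_real (of_int (2 * n) * pi) * \<i>)"
    by simp
  then show "\<exists>m::int. A = B + 2 * pi * of_int m"
    by auto
next
  assume "\<exists>m::int. A = B + 2 * pi * of_int m"
  then show "exp (\<i> * complex_of_real A) = exp (\<i> * complex_of_real B)"
    unfolding exp_eq by (auto simp: algebra_simps)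
qed

lemma sq_cross_eq_cases:
  fixes r q p1 p2 :: real
  assumes "(r + p1)\<^sup>2 * (q + p2)\<^sup>2 = (q + p1)\<^sup>2 * (r + p2)\<^sup>2"
  shows "(r - q) * (p2 - p1) = 0 \<or> 2 * r * q + (r + q) * (p1 + p2) + 2 * p1 * p2 = 0"
proof -
  have "((r + p1) * (q + p2))\<^sup>2 = ((q + p1) * (r + p2))\<^sup>2"
    using assms by (simp add: power_mult_distrib)
  then have "(r + p1) * (q + p2) - (q + p1) * (r + p2) = 0 \<or> (r + p1) * (q + p2) + (q + p1) * (r + p2) = 0"
    unfolding power2_eq_iff by auto
  then show ?thesis
    by (simp add: algebra_simps)
qed

lemma eq_of_sq_cross_eqs:
  fixes r q p1 p2 p3 :: real
  assumes "(r + p1)\<^sup>2 * (q + p2)\<^sup>2 = (q + p1)\<^sup>2 * (r + p2)\<^sup>2"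
    and "(r + p1)\<^sup>2 * (q + p3)\<^sup>2 = (q + p1)\<^sup>2 * (r + p3)\<^sup>2"
    and "(r + p2)\<^sup>2 * (q + p3)\<^sup>2 = (q + p2)\<^sup>2 * (r + p3)\<^sup>2"
    and "p1 \<noteq> p2" "p1 \<noteq> p3" "p2 \<noteq> p3"
  shows "r = q"
proof (rule ccontr)
  assume "r \<noteq> q"
  then have "2 * r * q + (r + q) * (p1 + p2) + 2 * p1 * p2 = 0"
    and "2 * r * q + (r + q) * (p1 + p3) + 2 * p1 * p3 = 0"
    and "2 * r * q + (r + q) * (p2 + p3) + 2 * p2 * p3 = 0"
    using sq_cross_eq_cases[OF assms(1)] sq_cross_eq_cases[OF assms(2)] sq_cross_eq_cases[OF assms(3)]
      assms(4-6) by auto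
  then have "(r + q + 2 * p1) * (p2 - p3) = 0" and "(r + q + 2 * p2) * (p1 - p3) = 0"
    by (simp_all add: algebra_simps)
  then show False
    using assms(4-6) by simp
qed

lemma eq_of_sq_cross_eq_zero:
  fixes r q p :: real
  assumes "r\<^sup>2 * (q + p)\<^sup>2 = q\<^sup>2 * (r + p)\<^sup>2" and "0 < r" "r \<le> q" and "q + p \<le> 0"
  shows "r = q"
proof -
  have "p \<noteq> 0"
    using assms(2-4) by auto
  then consider "r = q" | "2 * r * q + (r + q) * p = 0"
    using sq_cross_eq_cases[of r 0 q p] assms(1) by auto
  then show ?thesis
  proof cases
    case 2
    have "(r + q) * p \<le> (r + q) * (- q)"
      using assms(2-4) by (intro mult_left_mono) auto
    then have "q * q \<le> r * q"
      using 2 by (simp add: algebra_simps)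
    then show ?thesis
      using assms(2,3) by simp
  qed
qed

context torus
begin

abbreviation "\<alpha> \<equiv> alp x1 x2 x3"

definition "other_prod i = \<alpha> (i + 1) * \<alpha> (i + 2)"
definition "diff_prod i = (\<alpha> i - \<alpha> (i + 1)) * (\<alpha> i - \<alpha> (i + 2))"
definition "modulus i x = tor_F x1 x2 x3 a1 a2 a3 i x"
definition "phase i x = tor_G x1 x2 x3 a1 a2 a3 c1 c2 a i x"
definition "\<theta> i = phase i T"
definition "\<Psi> = tor_psi x1 x2 x3 a1 a2 a3 c1 c2 a"

lemma alp_simps [simp]: "\<alpha> 1 = x1" "\<alpha> (Suc 0) = x1" "\<alpha> 2 = x2" "\<alpha> 3 = x3" "\<alpha> 4 = x1" "\<alpha> 5 = x2"
  by (simp_all add: alp_def)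

lemma other_prod_simps: "other_prod 1 = x2 * x3" "other_prod 2 = x1 * x3" "other_prod 3 = x1 * x2"
  by (simp_all add: other_prod_def alp_def)

lemma diff_prod_nonzero: "i \<in> {1,2,3} \<Longrightarrow> diff_prod i \<noteq> 0"
  using distinct by (auto simp: diff_prod_def alp_def)

lemma pole_poly_other_prod: "i \<in> {1,2,3} \<Longrightarrow> pole_poly (- other_prod i) = 0"
  by (auto simp: pole_poly_def other_prod_def alp_def algebra_simps)

lemma alp_mult_other_prod: "i \<in> {1,2,3} \<Longrightarrow> \<alpha> i * other_prod i = - c1"
  by (auto simp: other_prod_def alp_def c1_def algebra_simps)

lemma modulus_eq: "modulus i x = sqrt ((area_density x + other_prod i) / diff_prod i)"
  unfolding modulus_def tor_F_def other_prod_def diff_prod_def area_density_def Let_def by simp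

lemma abs_modulus_sq:
  "i \<in> {1,2,3} \<Longrightarrow> \<bar>modulus i x\<bar>\<^sup>2 = \<bar>area_density x + other_prod i\<bar> / \<bar>diff_prod i\<bar>"
  unfolding modulus_eq real_sqrt_abs'[symmetric] by (simp add: abs_divide)

lemma phase_eq: "phase i x = \<alpha> i * sint (phase_integrand (\<alpha> i)) x"
  unfolding phase_def tor_G_def phase_integrand_def[abs_def] Let_def ..

lemma phase_shift_int:
  "i \<in> {1,2,3} \<Longrightarrow> phase i (x + of_int n * T) = phase i x + of_int n * \<theta> i"
  unfolding \<theta>_def phase_eq
  using sint_phase_integrand_shift_int[OF pole_poly_other_prod alp_mult_other_prod] by (simp add: algebra_simps)

lemma Psi_eq: "\<Psi> i x y = complex_of_real (modulus i x) * exp (\<i> * complex_of_real (phase i x + \<alpha> i * y))"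
  unfolding \<Psi>_def tor_psi_def modulus_def phase_def ..

lemma norm_Psi: "norm (\<Psi> i x y) = \<bar>modulus i x\<bar>"
  unfolding Psi_eq by (simp add: norm_mult)

lemma Psi_shift:
  assumes "i \<in> {1,2,3}"
  shows "\<Psi> i (x + of_int n * T) (y + t) = exp (\<i> * complex_of_real (of_int n * \<theta> i + \<alpha> i * t)) * \<Psi> i x y"
proof -
  have "phase i (x + of_int n * T) + \<alpha> i * (y + t) = (phase i x + \<alpha> i * y) + (of_int n * \<theta> i + \<alpha> i * t)"
    using phase_shift_int[OF assms] by (simp add: algebra_simps)
  moreover have "modulus i (x + of_int n * T) = modulus i x"
    unfolding modulus_eq area_density_shift_int ..
  ultimately show ?thesis
    unfolding Psi_eq by (simp add: distrib_left exp_add mult_ac)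
qed


lemma c2_nonzero_if_alp_zero:
  assumes "x1 = 0 \<or> x2 = 0 \<or> x3 = 0"
  shows "c2 \<noteq> 0"
proof
  assume "c2 = 0"
  moreover have "c1 = 0"
    using assms by (auto simp: c1_def)
  ultimately show False
    using root a2_pos a2_less_a1 by (simp add: R_def)
qed

lemma pole_poly_a1_nonpos:
  assumes "c2 \<noteq> 0"
  shows "pole_poly a1 \<le> 0"
proof -
  have "pole_poly a1 + (numer a1)^2 = 0"
    using pole_poly_add_numer_sq[OF assms root, of a1] by simp
  then show ?thesis
    using zero_le_power2[of "numer a1"] by linarith
qed

lemma exists_other_prod_eq_0:
  assumes "x1 = 0 \<or> x2 = 0 \<or> x3 = 0"
  shows "\<exists>i\<in>{1,2,3}. \<exists>j\<in>{1,2,3}. other_prod i = 0 \<and> pole_poly a1 = a1 * a1 * (a1 + other_prod j)"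
proof -
  consider "x1 = 0" | "x2 = 0" | "x3 = 0"
    using assms by blast
  then show ?thesis
  proof cases
    case 1
    then have "other_prod 2 = 0" "pole_poly a1 = a1 * a1 * (a1 + other_prod 1)"
      unfolding other_prod_simps pole_poly_def by (simp_all add: algebra_simps)
    then show ?thesis
      by blast
  next
    case 2
    then have "other_prod 1 = 0" "pole_poly a1 = a1 * a1 * (a1 + other_prod 2)"
      unfolding other_prod_simps pole_poly_def by (simp_all add: algebra_simps)
    then show ?thesis
      by blast
  next
    case 3
    then have "other_prod 1 = 0" "pole_poly a1 = a1 * a1 * (a1 + other_prod 3)"
      unfolding other_prod_simps pole_poly_def by (simp_all add: algebra_simps)
    then show ?thesis
      by blast
  qed
qed

lemma area_density_eq_a1_if_proportional:
  assumes proportional: "\<And>i. i \<in> {1,2,3} \<Longrightarrow> \<bar>area_density y + other_prod i\<bar> = L * \<bar>a1 + other_prod i\<bar>"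
  shows "area_density y = a1"
proof -
  define r where "r = area_density y"
  have cross: "(r + other_prod i)\<^sup>2 * (a1 + other_prod j)\<^sup>2 = (a1 + other_prod i)\<^sup>2 * (r + other_prod j)\<^sup>2"
    if "i \<in> {1,2,3}" "j \<in> {1,2,3}" for i j
  proof -
    have "(r + other_prod i)\<^sup>2 * (a1 + other_prod j)\<^sup>2 = (\<bar>r + other_prod i\<bar> * \<bar>a1 + other_prod j\<bar>)\<^sup>2"
      by (simp add: power_mult_distrib)
    also have "\<dots> = (\<bar>a1 + other_prod i\<bar> * \<bar>r + other_prod j\<bar>)\<^sup>2"
      using proportional[OF that(1)] proportional[OF that(2)] r_def by (simp add: algebra_simps)
    finally show ?thesis
      by (simp add: power_mult_distrib)
  qed
  have r_range: "0 < r" "r \<le> a1"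
    using area_density_bounds[of y] a2_pos unfolding r_def by auto
  show ?thesis
  proof (cases "x1 = 0 \<or> x2 = 0 \<or> x3 = 0")
    case False
    then have "other_prod 1 \<noteq> other_prod 2" "other_prod 1 \<noteq> other_prod 3" "other_prod 2 \<noteq> other_prod 3"
      unfolding other_prod_simps using distinct by auto
    then show ?thesis
      using eq_of_sq_cross_eqs[OF cross[of 1 2] cross[of 1 3] cross[of 2 3]] r_def by simp
  next
    case True
    obtain i j where ij: "i \<in> {1,2,3}" "j \<in> {1,2,3}" "other_prod i = 0"
      and pole_a1: "pole_poly a1 = a1 * a1 * (a1 + other_prod j)"
      using exists_other_prod_eq_0[OF True] by blast
    have "a1 * a1 * (a1 + other_prod j) \<le> 0"
      using pole_poly_a1_nonpos[OF c2_nonzero_if_alp_zero[OF True]] pole_a1 by simp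
    then have "a1 + other_prod j \<le> 0"
      using a2_pos a2_less_a1 by (simp add: mult_le_0_iff)
    moreover have "r\<^sup>2 * (a1 + other_prod j)\<^sup>2 = a1\<^sup>2 * (r + other_prod j)\<^sup>2"
      using cross[OF ij(1,2)] ij(3) by simp
    ultimately show ?thesis
      using eq_of_sq_cross_eq_zero r_range r_def by blast
  qed
qed

lemma period_lattice_fst:
  assumes "w \<in> period_lattice \<Psi>"
  shows "\<exists>n::int. fst w = of_int n * T"
proof -
  obtain l :: complex where l: "\<forall>i\<in>{1,2,3}. \<Psi> i (0 + fst w) (0 + snd w) = l * \<Psi> i 0 0"
    using assms unfolding period_lattice_def by blast
  have "\<bar>area_density (fst w) + other_prod i\<bar> = (norm l)\<^sup>2 * \<bar>a1 + other_prod i\<bar>" if i: "i \<in> {1,2,3}" for i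
  proof -
    have "\<Psi> i (fst w) (snd w) = l * \<Psi> i 0 0"
      using bspec[OF l i] by simp
    then have "\<bar>modulus i (fst w)\<bar> = norm l * \<bar>modulus i 0\<bar>"
      by (metis norm_Psi norm_mult)
    then have "\<bar>modulus i (fst w)\<bar>\<^sup>2 = (norm l)\<^sup>2 * \<bar>modulus i 0\<bar>\<^sup>2"
      by (simp add: power_mult_distrib)
    then have "\<bar>area_density (fst w) + other_prod i\<bar> / \<bar>diff_prod i\<bar>
        = (norm l)\<^sup>2 * (\<bar>area_density 0 + other_prod i\<bar> / \<bar>diff_prod i\<bar>)"
      by (simp only: abs_modulus_sq[OF i])
    then show ?thesis
      using diff_prod_nonzero[OF i] area_density_0 by (simp add: field_simps)
  qed
  then have "area_density (fst w) = a1"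
    by (rule area_density_eq_a1_if_proportional)
  then show ?thesis
    by (rule area_density_eq_a1_imp)
qed

lemma exists_modulus_nonzero: "\<exists>x. \<forall>i\<in>{1,2,3}. modulus i x \<noteq> 0"
proof -
  have "{a2..a1} - {- other_prod 1, - other_prod 2, - other_prod 3} \<noteq> {}"
    using a2_less_a1 infinite_Icc[of a2 a1] finite_subset[of "{a2..a1}"] by blast
  then obtain e where e: "a2 \<le> e" "e \<le> a1" "e \<notin> {- other_prod 1, - other_prod 2, - other_prod 3}"
    by (metis Diff_iff atLeastAtMost_iff ex_in_conv)
  obtain x where x: "area_density x = e"
    using area_density_attains[OF e(1,2)] by blast
  have "modulus i x \<noteq> 0" if i: "i \<in> {1,2,3}" for i
  proof -
    have "area_density x + other_prod i \<noteq> 0"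
      using e(3) i x by auto
    then show ?thesis
      unfolding modulus_eq using diff_prod_nonzero[OF i] by simp
  qed
  then show ?thesis
    by blast
qed

definition "resonant (n::int) t \<longleftrightarrow> (\<exists>k1 k2::int.
   of_int n * (\<theta> 1 - \<theta> 3) + (x1 - x3) * t = 2 * pi * of_int k1
 \<and> of_int n * (\<theta> 2 - \<theta> 3) + (x2 - x3) * t = 2 * pi * of_int k2)"

lemma resonant_iff_same_shift_factor:
  "resonant n t \<longleftrightarrow> (\<forall>i\<in>{1,2,3}. exp (\<i> * complex_of_real (of_int n * \<theta> i + \<alpha> i * t))
                                   = exp (\<i> * complex_of_real (of_int n * \<theta> 3 + \<alpha> 3 * t)))"
proof -
  have "of_int n * \<theta> i + \<alpha> i * t = of_int n * \<theta> 3 + \<alpha> 3 * t + 2 * pi * of_int m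
      \<longleftrightarrow> of_int n * (\<theta> i - \<theta> 3) + (\<alpha> i - x3) * t = 2 * pi * of_int m" for i m
    by (auto simp: algebra_simps)
  then have "exp (\<i> * complex_of_real (of_int n * \<theta> i + \<alpha> i * t))
          = exp (\<i> * complex_of_real (of_int n * \<theta> 3 + \<alpha> 3 * t))
      \<longleftrightarrow> (\<exists>k::int. of_int n * (\<theta> i - \<theta> 3) + (\<alpha> i - x3) * t = 2 * pi * of_int k)" for i
    unfolding exp_i_real_eq_iff by presburger
  from this[of 1] this[of 2] show ?thesis
    unfolding resonant_def by auto
qed

lemma resonant_lincomb:
  assumes "resonant n1 t1" "resonant n2 t2"
  shows "resonant (p * n1 + q * n2) (of_int p * t1 + of_int q * t2)"
proof -
  have lincomb: "of_int (p * n1 + q * n2) * \<Delta> + d * (of_int p * t1 + of_int q * t2) = 2 * pi * of_int (p * k + q * l)"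
    if "of_int n1 * \<Delta> + d * t1 = 2 * pi * of_int k" "of_int n2 * \<Delta> + d * t2 = 2 * pi * of_int l"
    for \<Delta> d :: real and k l :: int
  proof -
    have "of_int (p * n1 + q * n2) * \<Delta> + d * (of_int p * t1 + of_int q * t2)
        = of_int p * (of_int n1 * \<Delta> + d * t1) + of_int q * (of_int n2 * \<Delta> + d * t2)"
      by (simp add: algebra_simps)
    then show ?thesis
      unfolding that by (simp add: algebra_simps)
  qed
  show ?thesis
    using assms unfolding resonant_def by (blast intro: lincomb)
qed

lemma resonant_if_period:
  assumes w: "w \<in> period_lattice \<Psi>" and n: "fst w = of_int n * T"
  shows "resonant n (snd w)"
proof -
  obtain x0 where x0: "\<forall>i\<in>{1,2,3}. modulus i x0 \<noteq> 0"
    using exists_modulus_nonzero by blast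
  obtain l :: complex where l: "\<forall>i\<in>{1,2,3}. \<Psi> i (x0 + fst w) (0 + snd w) = l * \<Psi> i x0 0"
    using w unfolding period_lattice_def by blast
  have factor_eq: "exp (\<i> * complex_of_real (of_int n * \<theta> i + \<alpha> i * snd w)) = l"
    if i: "i \<in> {1,2,3}" for i
  proof -
    have "exp (\<i> * complex_of_real (of_int n * \<theta> i + \<alpha> i * snd w)) * \<Psi> i x0 0
        = \<Psi> i (x0 + fst w) (0 + snd w)"
      unfolding n by (rule Psi_shift[OF i, symmetric])
    also have "\<dots> = l * \<Psi> i x0 0"
      using bspec[OF l i] .
    finally have "exp (\<i> * complex_of_real (of_int n * \<theta> i + \<alpha> i * snd w)) * \<Psi> i x0 0 = l * \<Psi> i x0 0" .
    moreover have "\<Psi> i x0 0 \<noteq> 0"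
      unfolding Psi_eq using bspec[OF x0 i] by simp
    ultimately show ?thesis
      by simp
  qed
  show ?thesis
    unfolding resonant_iff_same_shift_factor
  proof
    fix i :: nat
    assume "i \<in> {1,2,3}"
    then show "exp (\<i> * complex_of_real (of_int n * \<theta> i + \<alpha> i * snd w))
             = exp (\<i> * complex_of_real (of_int n * \<theta> 3 + \<alpha> 3 * snd w))"
      using factor_eq[of i] factor_eq[of 3] by simp
  qed
qed

lemma period_lattice_eq: "period_lattice \<Psi> = {(of_int n * T, t) | n t. resonant n t}"
proof (intro equalityI subsetI)
  fix w
  assume w: "w \<in> period_lattice \<Psi>"
  obtain n :: int where n: "fst w = of_int n * T"
    using period_lattice_fst[OF w] by blast
  have "resonant n (snd w)"
    by (rule resonant_if_period[OF w n])
  moreover have "w = (of_int n * T, snd w)"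
    using n by (simp add: prod_eq_iff)
  ultimately show "w \<in> {(of_int n * T, t) | n t. resonant n t}"
    by blast
next
  fix w
  assume "w \<in> {(of_int n * T, t) | n t. resonant n t}"
  then obtain n t where w: "w = (of_int n * T, t)" and "resonant n t"
    by blast
  define l where "l = exp (\<i> * complex_of_real (of_int n * \<theta> 3 + \<alpha> 3 * t))"
  have "\<Psi> i (x + fst w) (y + snd w) = l * \<Psi> i x y" if i: "i \<in> {1,2,3}" for i x y
  proof -
    have "exp (\<i> * complex_of_real (of_int n * \<theta> i + \<alpha> i * t)) = l"
      using \<open>resonant n t\<close> i unfolding resonant_iff_same_shift_factor l_def by blast
    then show ?thesis
      using Psi_shift[OF i, of x n y t] unfolding w by simp
  qed
  moreover have "l \<noteq> 0"
    unfolding l_def by simp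
  ultimately show "w \<in> period_lattice \<Psi>"
    unfolding period_lattice_def by blast
qed

end

locale rational_torus = torus +
  fixes d1 d2 :: int
  assumes d1: "x1 - x3 = of_int d1" and d2: "x2 - x3 = of_int d2"
    and coprime: "coprime d1 d2"
    and rational: "\<exists>\<tau>. (\<theta> 1 - \<theta> 3 + (x1 - x3) * \<tau>) / (2 * pi) \<in> \<rat>
                    \<and> (\<theta> 2 - \<theta> 3 + (x2 - x3) * \<tau>) / (2 * pi) \<in> \<rat>"
begin

lemma resonant_0_2pi: "resonant 0 (2 * pi * of_int m)"
  unfolding resonant_def d1 d2 by (intro exI[of _ "d1 * m"] exI[of _ "d2 * m"]) simp

lemma resonant_0_imp: "resonant 0 t \<Longrightarrow> \<exists>m::int. t = 2 * pi * of_int m"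
proof -
  assume "resonant 0 t"
  then obtain k1 k2 :: int where k: "of_int d1 * t = 2 * pi * of_int k1" "of_int d2 * t = 2 * pi * of_int k2"
    unfolding resonant_def d1 d2 by (auto simp: mult.commute)
  obtain u v :: int where "u * d1 + v * d2 = 1"
    using coprime bezout_int[of d1 d2] by (metis coprime_iff_gcd_eq_1)
  then have "t = t * (of_int u * of_int d1 + of_int v * of_int d2)"
    using arg_cong[of _ _ real_of_int] by fastforce
  also have "\<dots> = of_int u * (of_int d1 * t) + of_int v * (of_int d2 * t)"
    by (simp add: algebra_simps)
  also have "\<dots> = 2 * pi * of_int (u * k1 + v * k2)"
    unfolding k by (simp add: algebra_simps)
  finally show ?thesis
    by blast
qed

lemma exists_resonant_pos: "\<exists>n::nat. 0 < n \<and> (\<exists>t. resonant (int n) t)"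
proof -
  obtain \<tau> where "(\<theta> 1 - \<theta> 3 + (x1 - x3) * \<tau>) / (2 * pi) \<in> \<rat>"
    and "(\<theta> 2 - \<theta> 3 + (x2 - x3) * \<tau>) / (2 * pi) \<in> \<rat>"
    using rational by blast
  then obtain p1 m1 p2 m2 :: int where m: "0 < m1" "0 < m2"
    and p: "(\<theta> 1 - \<theta> 3 + (x1 - x3) * \<tau>) / (2 * pi) = of_int p1 / of_int m1"
      "(\<theta> 2 - \<theta> 3 + (x2 - x3) * \<tau>) / (2 * pi) = of_int p2 / of_int m2"
    by (metis Rats_cases')
  have scale: "of_int (m * m') * \<Delta> + d * (of_int (m * m') * \<tau>) = 2 * pi * of_int (p * m')"
    if "(\<Delta> + d * \<tau>) / (2 * pi) = of_int p / of_int m" "0 < m" for \<Delta> d :: real and p m m' :: int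
  proof -
    have "of_int (m * m') * \<Delta> + d * (of_int (m * m') * \<tau>) = of_int m' * (of_int m * (\<Delta> + d * \<tau>))"
      by (simp add: algebra_simps)
    also have "of_int m * (\<Delta> + d * \<tau>) = 2 * pi * of_int p"
      using that by (simp add: field_simps)
    finally show ?thesis
      by simp
  qed
  have "of_int (m1 * m2) * (\<theta> 1 - \<theta> 3) + (x1 - x3) * (of_int (m1 * m2) * \<tau>) = 2 * pi * of_int (p1 * m2)"
    using scale[OF p(1) m(1)] by simp
  moreover have "of_int (m1 * m2) * (\<theta> 2 - \<theta> 3) + (x2 - x3) * (of_int (m1 * m2) * \<tau>) = 2 * pi * of_int (p2 * m1)"
    using scale[OF p(2) m(2), of m1] by (simp add: mult.commute)
  ultimately have "resonant (m1 * m2) (of_int (m1 * m2) * \<tau>)"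
    unfolding resonant_def by blast
  then have "resonant (int (nat (m1 * m2))) (of_int (m1 * m2) * \<tau>)"
    using m by simp
  moreover have "0 < nat (m1 * m2)"
    using m by simp
  ultimately show ?thesis
    by blast
qed

definition "N0 = (LEAST n::nat. 0 < n \<and> (\<exists>t. resonant (int n) t))"
definition "t0 = (SOME t. resonant (int N0) t)"
definition "u0 = (of_int (int N0) * T, t0)"
definition "w0 = (0::real, 2 * pi)"

lemma N0_pos: "0 < N0" and resonant_N0_t0: "resonant (int N0) t0"
proof -
  have N0: "0 < N0 \<and> (\<exists>t. resonant (int N0) t)"
    unfolding N0_def by (rule LeastI_ex[OF exists_resonant_pos])
  then show "0 < N0"
    by simp
  show "resonant (int N0) t0"
    unfolding t0_def by (rule someI_ex) (use N0 in simp)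
qed

lemma N0_le: "0 < n \<Longrightarrow> resonant (int n) t \<Longrightarrow> N0 \<le> n"
  unfolding N0_def by (rule Least_le) blast

lemma resonant_iff_multiple:
  "resonant n t \<longleftrightarrow> (\<exists>m k. n = m * int N0 \<and> t = of_int m * t0 + 2 * pi * of_int k)"
proof
  assume "resonant n t"
  define m where "m = n div int N0"
  define r where "r = n mod int N0"
  have n: "n = m * int N0 + r" and r: "0 \<le> r" "r < int N0"
    using N0_pos by (simp_all add: m_def r_def)
  have "resonant (1 * n + (- m) * int N0) (of_int 1 * t + of_int (- m) * t0)"
    by (rule resonant_lincomb[OF \<open>resonant n t\<close> resonant_N0_t0])
  then have res_r: "resonant r (t - of_int m * t0)"
    using n by simp
  have "r = 0"
  proof (rule ccontr)
    assume "r \<noteq> 0"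
    then have "N0 \<le> nat r"
      using N0_le[of "nat r" "t - of_int m * t0"] res_r r by simp
    then show False
      using r by linarith
  qed
  then obtain k where "t - of_int m * t0 = 2 * pi * of_int k"
    using res_r resonant_0_imp by auto
  then show "\<exists>m k. n = m * int N0 \<and> t = of_int m * t0 + 2 * pi * of_int k"
    using n \<open>r = 0\<close> by (intro exI[of _ m] exI[of _ k]) simp
next
  assume "\<exists>m k. n = m * int N0 \<and> t = of_int m * t0 + 2 * pi * of_int k"
  then obtain m k where "n = m * int N0" "t = of_int m * t0 + 2 * pi * of_int k"
    by blast
  then show "resonant n t"
    using resonant_lincomb[OF resonant_N0_t0 resonant_0_2pi, of m 1 k] by (simp add: mult.commute)
qed

lemma period_lattice_eq_span:
  "period_lattice \<Psi> = {of_int m *\<^sub>R u0 + of_int n *\<^sub>R w0 | m n. True}"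
proof (intro equalityI subsetI)
  fix z
  assume "z \<in> period_lattice \<Psi>"
  then obtain n t where z: "z = (of_int n * T, t)" and "resonant n t"
    unfolding period_lattice_eq by blast
  then obtain m k where "n = m * int N0" "t = of_int m * t0 + 2 * pi * of_int k"
    using resonant_iff_multiple by blast
  then have "z = of_int m *\<^sub>R u0 + of_int k *\<^sub>R w0"
    unfolding z u0_def w0_def by simp
  then show "z \<in> {of_int m *\<^sub>R u0 + of_int n *\<^sub>R w0 | m n. True}"
    by blast
next
  fix z
  assume "z \<in> {of_int m *\<^sub>R u0 + of_int n *\<^sub>R w0 | m n. True}"
  then obtain m k :: int where z: "z = of_int m *\<^sub>R u0 + of_int k *\<^sub>R w0"
    by blast
  have "resonant (m * int N0) (of_int m * t0 + 2 * pi * of_int k)"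
    using resonant_iff_multiple by blast
  moreover have "z = (of_int (m * int N0) * T, of_int m * t0 + 2 * pi * of_int k)"
    unfolding z u0_def w0_def by simp
  ultimately show "z \<in> period_lattice \<Psi>"
    unfolding period_lattice_eq by blast
qed

lemma lattice_basis_u0_w0: "lattice_basis (period_lattice \<Psi>) u0 w0"
  unfolding lattice_basis_def period_lattice_eq_span
  using N0_pos T_pos by (simp add: u0_def w0_def)

lemma lattice_basis_imp:
  assumes "lattice_basis (period_lattice \<Psi>) u w"
  obtains ju jw :: int where "fst u = of_int ju * T" "fst w = of_int jw * T"
    and "2 * pi * T \<le> \<bar>fst u * snd w - snd u * fst w\<bar>"
proof -
  have det: "fst u * snd w - snd u * fst w \<noteq> 0"
    and span: "period_lattice \<Psi> = {of_int m *\<^sub>R u + of_int n *\<^sub>R w | m n. True}"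
    using assms unfolding lattice_basis_def by auto
  have "u = of_int 1 *\<^sub>R u + of_int 0 *\<^sub>R w" "w = of_int 0 *\<^sub>R u + of_int 1 *\<^sub>R w"
    by simp_all
  then have "u \<in> period_lattice \<Psi>" "w \<in> period_lattice \<Psi>"
    unfolding span by blast+
  then obtain m1 n1 m2 n2 :: int where u: "u = of_int m1 *\<^sub>R u0 + of_int n1 *\<^sub>R w0"
    and w: "w = of_int m2 *\<^sub>R u0 + of_int n2 *\<^sub>R w0"
    unfolding period_lattice_eq_span by blast
  have fst_uw: "fst u = of_int (m1 * int N0) * T" "fst w = of_int (m2 * int N0) * T"
    unfolding u w u0_def w0_def by simp_all
  have det_eq: "fst u * snd w - snd u * fst w = of_int (m1 * n2 - n1 * m2) * (2 * pi * of_int (int N0) * T)"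
    unfolding u w u0_def w0_def by (simp add: algebra_simps)
  then have "real_of_int (m1 * n2 - n1 * m2) \<noteq> 0"
    using det by auto
  then have "m1 * n2 - n1 * m2 \<noteq> 0"
    by (metis of_int_0)
  then have "1 \<le> \<bar>real_of_int (m1 * n2 - n1 * m2)\<bar>"
    by linarith
  then have "1 * (2 * pi * 1 * T) \<le> \<bar>of_int (m1 * n2 - n1 * m2)\<bar> * (2 * pi * real N0 * T)"
    using N0_pos T_pos by (intro mult_mono) auto
  then have "2 * pi * T \<le> \<bar>fst u * snd w - snd u * fst w\<bar>"
    unfolding det_eq using T_pos by (simp add: abs_mult)
  then show ?thesis
    using that fst_uw by blast
qed

lemma fund_par_area_gt:
  assumes "lattice_basis (period_lattice \<Psi>) u w"
  shows "(\<lambda>z. area_density (fst z)) integrable_on fund_par u w"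
    and "integral (fund_par u w) (\<lambda>z. area_density (fst z)) > pi\<^sup>2 * (a1 + a2) / s"
proof -
  obtain ju jw :: int where fst_uw: "fst u = of_int ju * T" "fst w = of_int jw * T"
    and det_ge: "2 * pi * T \<le> \<bar>fst u * snd w - snd u * fst w\<bar>"
    using lattice_basis_imp[OF assms] .
  have "fst u * snd w - snd u * fst w \<noteq> 0"
  proof -
    have "0 < 2 * pi * T"
      using T_pos by simp
    then show ?thesis
      using det_ge by auto
  qed
  then have int: "((\<lambda>z. area_density (fst z)) has_integral
      (\<bar>fst u * snd w - snd u * fst w\<bar> * area_primitive T / T)) (fund_par u w)"
    by (rule has_integral_area_density_fund_par[OF fst_uw])
  then show "(\<lambda>z. area_density (fst z)) integrable_on fund_par u w"
    by blast
  have "2 * pi * area_primitive T \<le> \<bar>fst u * snd w - snd u * fst w\<bar> * area_primitive T / T"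
    using det_ge area_primitive_T_pos T_pos by (simp add: field_simps)
  then show "integral (fund_par u w) (\<lambda>z. area_density (fst z)) > pi\<^sup>2 * (a1 + a2) / s"
    using integral_unique[OF int] two_pi_area_primitive_T_gt by linarith
qed

end

theorem lemma1:
  fixes \<alpha>1 \<alpha>2 \<alpha>3 :: int and a1 a2 c2 :: real
  defines "x1 \<equiv> real_of_int \<alpha>1" and "x2 \<equiv> real_of_int \<alpha>2" and "x3 \<equiv> real_of_int \<alpha>3"
  defines "b \<equiv> - x1 - x2 - x3"
      and "c \<equiv> x1 * x2 + x1 * x3 + x2 * x3"
      and "c1 \<equiv> - x1 * x2 * x3"
  defines "P \<equiv> a1^3 * a2^2 + a1^2 * a2^3 + (a1^2 * a2 + a1 * a2^2) * b * c1
               + (a1^2 + a2^2) * c1^2 + 2 * a1^2 * a2^2 * c"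
      and "R \<equiv> (a1 + a2) * c1^2 - a1^2 * a2^2 + a1 * a2 * b * c1"
  defines "a3 \<equiv> (c1^2 + c2^2) / (a1 * a2)"
  defines "a \<equiv> (b * c1 + a1 * a3 + a2 * a3 - a1 * a2) / c2"
  assumes distinct: "\<alpha>1 \<noteq> \<alpha>2" "\<alpha>1 \<noteq> \<alpha>3" "\<alpha>2 \<noteq> \<alpha>3"
      and coprime: "coprime (\<alpha>1 - \<alpha>3) (\<alpha>2 - \<alpha>3)"
      and a_order: "a1 > a2" "a2 > 0"
      and P_nonpos: "P \<le> 0"
      and disc: "P^2 - (a1 - a2)^2 * R^2 \<ge> 0"
      and root: "(a1 - a2)^2 * c2^4 + 2 * P * c2^2 + R^2 = 0"
      and rational: "\<exists>\<tau>::real.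
          (tor_G x1 x2 x3 a1 a2 a3 c1 c2 a 1 (tor_T a1 a2 a3)
            - tor_G x1 x2 x3 a1 a2 a3 c1 c2 a 3 (tor_T a1 a2 a3) + (x1 - x3) * \<tau>) / (2 * pi) \<in> \<rat>
        \<and> (tor_G x1 x2 x3 a1 a2 a3 c1 c2 a 2 (tor_T a1 a2 a3)
            - tor_G x1 x2 x3 a1 a2 a3 c1 c2 a 3 (tor_T a1 a2 a3) + (x2 - x3) * \<tau>) / (2 * pi) \<in> \<rat>"
  shows "(\<exists>u w. lattice_basis (period_lattice (tor_psi x1 x2 x3 a1 a2 a3 c1 c2 a)) u w)
    \<and> (\<forall>u w. lattice_basis (period_lattice (tor_psi x1 x2 x3 a1 a2 a3 c1 c2 a)) u w \<longrightarrow>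
         (\<lambda>z. 2 * exp (tor_v a1 a2 a3 (fst z))) integrable_on fund_par u w
       \<and> integral (fund_par u w) (\<lambda>z. 2 * exp (tor_v a1 a2 a3 (fst z)))
           > pi^2 * (a1 + a2) / sqrt (a1 + a3))"
proof -
  (* P_nonpos and disc only guarantee that the quartic has a real root c2. *)
  interpret C: torus_coefficients x1 x2 x3 a1 a2 c2
    using a_order by unfold_locales
  have coeffs: "C.b = b" "C.c = c" "C.c1 = c1" "C.a3 = a3" "C.a = a" "C.P = P" "C.R = R"
    unfolding C.b_def C.c_def C.c1_def C.a3_def C.a_def C.P_def C.R_def
      b_def c_def c1_def a3_def a_def P_def R_def by simp_all
  interpret torus x1 x2 x3 a1 a2 c2
  proof unfold_locales
    show "x1 \<noteq> x2" "x1 \<noteq> x3" "x2 \<noteq> x3"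
      using distinct by (simp_all add: x1_def x2_def x3_def)
    show "(a1 - a2)^2 * c2^4 + 2 * C.P * c2^2 + C.R^2 = 0"
      using root by (simp only: coeffs)
  qed
  interpret rational_torus x1 x2 x3 a1 a2 c2 "\<alpha>1 - \<alpha>3" "\<alpha>2 - \<alpha>3"
  proof unfold_locales
    show "x1 - x3 = of_int (\<alpha>1 - \<alpha>3)" "x2 - x3 = of_int (\<alpha>2 - \<alpha>3)"
      by (simp_all add: x1_def x2_def x3_def)
    show "coprime (\<alpha>1 - \<alpha>3) (\<alpha>2 - \<alpha>3)"
      by (rule coprime)
    show "\<exists>\<tau>. (\<theta> 1 - \<theta> 3 + (x1 - x3) * \<tau>) / (2 * pi) \<in> \<rat>
             \<and> (\<theta> 2 - \<theta> 3 + (x2 - x3) * \<tau>) / (2 * pi) \<in> \<rat>"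
      using rational unfolding \<theta>_def phase_def C.T_def by (simp only: coeffs)
  qed
  have torus_eqs: "tor_psi x1 x2 x3 a1 a2 a3 c1 c2 a = \<Psi>" "sqrt (a1 + a3) = C.s"
    "\<And>x. 2 * exp (tor_v a1 a2 a3 x) = C.area_density x"
    unfolding \<Psi>_def C.s_def C.area_density_def by (simp_all only: coeffs)
  show ?thesis
    unfolding torus_eqs using lattice_basis_u0_w0 fund_par_area_gt by blast
qed

end
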